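(* For every integer $n\ge 1$, \[ \sum_{\sigma \in \mathrm{And}^{I}_n} s^{\mathrm{ides}(\sigma)}t^{\mathrm{des}(\sigma)} q^{\mathrm{maj}(\sigma)} =\sum_{\sigma \in \mathrm{And}^{II}_n} s^{\mathrm{ides}(\sigma)}t^{\mathrm{des}(\sigma)} q^{\mathrm{maj}(\sigma)} =\sum_{\sigma \in \mathrm{RS}_{n}} s^{\mathrm{ides}(\sigma)}t^{\mathrm{des}(\sigma)} q^{\mathrm{maj}(\sigma)} \] as polynomials in $s,t,q$.
   Context: A "permutation" of length $n$ here may be any word of $n$ distinct integers. The empty word and every one-letter word are both Andr\'e I and Andr\'e II permutations. A word $\sigma$ of $n\ge 2$ distinct integers is written uniquely as $\sigma=\tau\,\min(\sigma)\,\tau'$. Then $\sigma$ is an Andr\'e I permutation if $\tau$ and $\tau'$ are Andr\'e I permutations and the largest letter of the word $\tau\tau'$ lies in $\tau'$; $\sigma$ is an Andr\'e II permutation if $\tau$ and $\tau'$ are Andr\'e II permutations and the smallest letter of $\tau\tau'$ lies in $\tau'$. $\mathrm{And}^{I}_n$ (resp. $\mathrm{And}^{II}_n$) is the set of Andr\'e I (resp. Andr\'e II) permutations of $[n]=\{1,\dots,n\}$. A permutation $\sigma=\sigma_1\cdots\sigma_n$ of $[n]$ is a simsun permutation if $\sigma_n=n$ and, for every $k\in\{1,\dots,n\}$, the subword of $\sigma$ formed by the letters $1,\dots,k$ has no double descent (a double descent of a word $w_1\cdots w_m$ is an index $i$ with $w_i>w_{i+1}>w_{i+2}$). $\mathrm{RS}_n$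 is the set of simsun permutations of $[n]$. For $\sigma=\sigma_1\cdots\sigma_n$: $\mathrm{Des}(\sigma)=\{i\in[n-1]:\sigma_i>\sigma_{i+1}\}$, $\mathrm{des}(\sigma)=|\mathrm{Des}(\sigma)|$, $\mathrm{maj}(\sigma)=\sum_{i\in\mathrm{Des}(\sigma)} i$, and $\mathrm{ides}(\sigma)=\mathrm{des}(\sigma^{-1})$, the number of descents of the inverse permutation. *)

theory Defs
  imports Main
begin

definition left_part :: "int list \<Rightarrow> int list" where
  "left_part w = takeWhile (\<lambda>x. x \<noteq> Min (set w)) w"

definition right_part :: "int list \<Rightarrow> int list" where
  "right_part w = tl (dropWhile (\<lambda>x. x \<noteq> Min (set w)) w)"

lemma takeWhile_shorter: "x \<in> set w \<Longrightarrow> length (takeWhile (\<lambda>y. y \<noteq> x) w) < length w"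
  by (induction w) auto

lemma left_part_shorter: "w \<noteq> [] \<Longrightarrow> length (left_part w) < length w"
  unfolding left_part_def by (rule takeWhile_shorter) simp

lemma right_part_shorter: "w \<noteq> [] \<Longrightarrow> length (right_part w) < length w"
proof -
  assume "w \<noteq> []"
  then have "Min (set w) \<in> set w" by simp
  then have "dropWhile (\<lambda>x. x \<noteq> Min (set w)) w \<noteq> []"
    by (simp add: dropWhile_eq_Nil_conv)
  moreover have "length (dropWhile (\<lambda>x. x \<noteq> Min (set w)) w) \<le> length w"
    by (simp add: length_dropWhile_le)
  ultimately show ?thesis unfolding right_part_def
    by (cases "dropWhile (\<lambda>x. x \<noteq> Min (set w)) w") auto
qed

function andreI :: "int list \<Rightarrow> bool" where
  "andreI w = (if length w \<le> 1 then True else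
     (andreI (left_part w) \<and> andreI (right_part w) \<and>
      Max (set (left_part w @ right_part w)) \<in> set (right_part w)))"
  by pat_completeness auto
termination
  by (relation "measure length") (auto intro!: left_part_shorter right_part_shorter)

function andreII :: "int list \<Rightarrow> bool" where
  "andreII w = (if length w \<le> 1 then True else
     (andreII (left_part w) \<and> andreII (right_part w) \<and>
      Min (set (left_part w @ right_part w)) \<in> set (right_part w)))"
  by pat_completeness auto
termination
  by (relation "measure length") (auto intro!: left_part_shorter right_part_shorter)

definition perms :: "nat \<Rightarrow> int list set" where
  "perms n = {w. distinct w \<and> set w = {1..int n}}"

definition AndI :: "nat \<Rightarrow> int list set" where
  "AndI n = {w \<in> perms n. andreI w}"

definition AndII :: "nat \<Rightarrow> int list set" where
  "AndII n = {w \<in> perms n. andreII w}"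

definition has_double_descent :: "int list \<Rightarrow> bool" where
  "has_double_descent u = (\<exists>i. i + 2 < length u \<and> u ! i > u ! (i+1) \<and> u ! (i+1) > u ! (i+2))"

definition RS :: "nat \<Rightarrow> int list set" where
  "RS n = {w \<in> perms n. w \<noteq> [] \<and> last w = int n \<and>
     (\<forall>k\<in>{1..int n}. \<not> has_double_descent (filter (\<lambda>x. x \<le> k) w))}"

text \<open>Descent set with 1-based positions: i \<in> Des w iff w_i > w_(i+1).\<close>
definition Des :: "int list \<Rightarrow> nat set" where
  "Des w = {i. 1 \<le> i \<and> i < length w \<and> w ! (i - 1) > w ! i}"

definition des :: "int list \<Rightarrow> nat" where
  "des w = card (Des w)"

definition maj :: "int list \<Rightarrow> nat" where
  "maj w = (\<Sum>i\<in>Des w. i)"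

text \<open>Inverse of a permutation w of [n], as a word: its j-th letter is the
  (1-based) position of letter j in w.\<close>
definition inv_word :: "int list \<Rightarrow> int list" where
  "inv_word w = map (\<lambda>j. int (Suc (THE i. i < length w \<and> w ! i = int j))) [1..<Suc (length w)]"

definition ides :: "int list \<Rightarrow> nat" where
  "ides w = des (inv_word w)"

end

theory Submission
  imports Defs
begin

declare andreI.simps [simp del] andreII.simps [simp del]

lemma left_part_Min_right_part:
  assumes "w \<noteq> []"
  shows "left_part w @ Min (set w) # right_part w = w"
proof -
  let ?P = "\<lambda>x. x \<noteq> Min (set w)"
  have "dropWhile ?P w \<noteq> []" "hd (dropWhile ?P w) = Min (set w)"
    using assms hd_dropWhile[of ?P w] by (auto simp: dropWhile_eq_Nil_conv)
  then have "dropWhile ?P w = Min (set w) # right_part w"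
    unfolding right_part_def by (metis list.collapse)
  then show ?thesis
    unfolding left_part_def by (metis takeWhile_dropWhile_id)
qed

lemma Min_less_left_part: "x \<in> set (left_part w) \<Longrightarrow> Min (set w) < x"
proof -
  assume x: "x \<in> set (left_part w)"
  then have "x \<in> set w" "x \<noteq> Min (set w)" unfolding left_part_def
    by (auto dest: set_takeWhileD)
  then show ?thesis by (simp add: order_neq_le_trans)
qed

lemma Min_le_right_part: "x \<in> set (right_part w) \<Longrightarrow> Min (set w) \<le> x"
proof -
  assume "x \<in> set (right_part w)"
  then have "x \<in> set w" unfolding right_part_def
    by (metis list.sel(2) list.set_sel(2) set_dropWhileD)
  then show ?thesis by simp
qed

lemma
  assumes "\<forall>x\<in>set l. a < x" "\<forall>x\<in>set r. a \<le> x"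
  shows Min_split: "Min (set (l @ a # r)) = a"
    and left_part_split: "left_part (l @ a # r) = l"
    and right_part_split: "right_part (l @ a # r) = r"
proof -
  show Min: "Min (set (l @ a # r)) = a"
    using assms by (intro Min_eqI) (auto intro: less_imp_le)
  have "a \<notin> set l" using assms by auto
  then have "takeWhile (\<lambda>x. x \<noteq> a) (l @ a # r) = l" "dropWhile (\<lambda>x. x \<noteq> a) (l @ a # r) = a # r"
    by (subst takeWhile_append2 dropWhile_append2; auto)+
  then show "left_part (l @ a # r) = l" "right_part (l @ a # r) = r"
    unfolding left_part_def right_part_def Min by simp_all
qed


lemma min_split_obtain:
  fixes w :: "int list"
  assumes "\<not> length w \<le> 1"
  obtains l a r where "w = l @ a # r" "\<forall>x\<in>set l. a < x" "\<forall>x\<in>set r. a \<le> x" "l \<noteq> [] \<or> r \<noteq> []"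
proof
  have "w \<noteq> []" using assms by auto
  show "w = left_part w @ Min (set w) # right_part w"
    using left_part_Min_right_part[OF \<open>w \<noteq> []\<close>] by simp
  then have "length w = Suc (length (left_part w) + length (right_part w))"
    by (metis length_Cons length_append add_Suc_right)
  then show "left_part w \<noteq> [] \<or> right_part w \<noteq> []"
    using assms by auto
qed (auto intro: Min_less_left_part Min_le_right_part)

lemma min_split_induct [case_names short split]:
  fixes P :: "int list \<Rightarrow> bool"
  assumes short: "\<And>w. length w \<le> 1 \<Longrightarrow> P w"
    and split: "\<And>l a r. \<forall>x\<in>set l. a < x \<Longrightarrow> \<forall>x\<in>set r. a \<le> x \<Longrightarrow> l \<noteq> [] \<or> r \<noteq> [] \<Longrightarrow>
      P l \<Longrightarrow> P r \<Longrightarrow> P (l @ a # r)"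
  shows "P w"
proof (induction w rule: length_induct)
  case (1 w)
  show ?case
  proof (cases "length w \<le> 1")
    case False
    then obtain l a r where "w = l @ a # r" "\<forall>x\<in>set l. a < x" "\<forall>x\<in>set r. a \<le> x" "l \<noteq> [] \<or> r \<noteq> []"
      by (rule min_split_obtain)
    with 1 show ?thesis by (auto intro: split)
  qed (rule short)
qed

lemma andreI_short: "length w \<le> 1 \<Longrightarrow> andreI w"
  by (simp add: andreI.simps)

lemma andreII_short: "length w \<le> 1 \<Longrightarrow> andreII w"
  by (simp add: andreII.simps)

lemma andreI_split:
  assumes "\<forall>x\<in>set l. a < x" "\<forall>x\<in>set r. a \<le> x" "l \<noteq> [] \<or> r \<noteq> []"
  shows "andreI (l @ a # r) \<longleftrightarrow> andreI l \<and> andreI r \<and> Max (set (l @ r)) \<in> set r"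
  using assms(3) by (subst andreI.simps) (auto simp: left_part_split[OF assms(1,2)] right_part_split[OF assms(1,2)])

lemma andreII_split:
  assumes "\<forall>x\<in>set l. a < x" "\<forall>x\<in>set r. a \<le> x" "l \<noteq> [] \<or> r \<noteq> []"
  shows "andreII (l @ a # r) \<longleftrightarrow> andreII l \<and> andreII r \<and> Min (set (l @ r)) \<in> set r"
  using assms(3) by (subst andreII.simps) (auto simp: left_part_split[OF assms(1,2)] right_part_split[OF assms(1,2)])

text \<open>The Andr\'e II condition for words with repeated letters, where of two equal letters
  the left one counts as the smaller: this is what Andr\'e II becomes after standardization.\<close>

function weak_andreII :: "int list \<Rightarrow> bool" where
  "weak_andreII w = (if length w \<le> 1 then True else
     (weak_andreII (left_part w) \<and> weak_andreII (right_part w) \<and> right_part w \<noteq> [] \<and>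
      (left_part w \<noteq> [] \<longrightarrow> Min (set (right_part w)) < Min (set (left_part w)))))"
  by pat_completeness auto
termination
  by (relation "measure length") (auto intro!: left_part_shorter right_part_shorter)

declare weak_andreII.simps [simp del]

lemma weak_andreII_short: "length w \<le> 1 \<Longrightarrow> weak_andreII w"
  by (subst weak_andreII.simps) simp

lemma weak_andreII_split:
  assumes "\<forall>x\<in>set l. a < x" "\<forall>x\<in>set r. a \<le> x" "l \<noteq> [] \<or> r \<noteq> []"
  shows "weak_andreII (l @ a # r) \<longleftrightarrow> weak_andreII l \<and> weak_andreII r \<and> r \<noteq> [] \<and>
    (l \<noteq> [] \<longrightarrow> Min (set r) < Min (set l))"
  using assms(3) by (subst weak_andreII.simps) (auto simp: left_part_split[OF assms(1,2)] right_part_split[OF assms(1,2)])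

lemma Suc_mem_Des: "Suc i \<in> Des w \<longleftrightarrow> Suc i < length w \<and> w ! Suc i < w ! i"
  unfolding Des_def by auto

lemma zero_not_mem_Des: "0 \<notin> Des w"
  unfolding Des_def by auto

lemma Des_subset: "Des w \<subseteq> {1..<length w}"
  unfolding Des_def by auto

lemma mem_Des_iff: "j \<in> Des w \<longleftrightarrow> 0 < j \<and> j < length w \<and> w ! j < w ! (j - 1)"
  unfolding Des_def by auto

lemma Des_split:
  assumes "\<forall>x\<in>set l. a < x" "\<forall>x\<in>set r. a \<le> x"
  shows "Des (l @ a # r) = Des l \<union> (if l = [] then {} else {length l}) \<union> (+) (Suc (length l)) ` Des r"
proof (rule set_eqI)
  fix j
  have image: "j \<in> (+) (Suc (length l)) ` Des r \<longleftrightarrow> Suc (length l) \<le> j \<and> j - Suc (length l) \<in> Des r"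
    by (auto intro: image_eqI[where x = "j - Suc (length l)"])
  consider "j < length l" | "j = length l" | "j = Suc (length l)" | "Suc (length l) < j"
    by linarith
  then show "j \<in> Des (l @ a # r) \<longleftrightarrow> j \<in> Des l \<union> (if l = [] then {} else {length l}) \<union> (+) (Suc (length l)) ` Des r"
  proof cases
    case 1
    then show ?thesis unfolding image by (auto simp: mem_Des_iff nth_append)
  next
    case 2
    show ?thesis
    proof (cases "l = []")
      case True
      with 2 show ?thesis unfolding image by (auto simp: mem_Des_iff)
    next
      case False
      with 2 have "l ! (j - 1) \<in> set l" by auto
      with 2 False assms(1) show ?thesis unfolding image by (auto simp: mem_Des_iff nth_append)
    qed
  next
    case 3
    then show ?thesis unfolding image using assms(2)
      by (cases r) (auto simp: mem_Des_iff nth_append)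
  next
    case 4
    define k where "k = j - Suc (length l)"
    have j: "j = Suc (length l) + k" "0 < k" using 4 unfolding k_def by auto
    have "j \<in> Des (l @ a # r) \<longleftrightarrow> k \<in> Des r"
      using j by (auto simp: mem_Des_iff nth_append)
    moreover have "j \<notin> Des l" using j Des_subset[of l] by auto
    ultimately show ?thesis using j by auto
  qed
qed

lemma Des_map_strict_mono: "strict_mono f \<Longrightarrow> Des (map f w) = Des w"
  unfolding Des_def by (auto simp: strict_mono_less)

definition shift :: "int \<Rightarrow> int list \<Rightarrow> int list" where
  "shift c w = map (\<lambda>v. v + c) w"

lemma strict_mono_add: "strict_mono (\<lambda>v::int. v + c)"
  by (simp add: strict_mono_def)

lemma shift_simps [simp]:
  "length (shift c w) = length w" "set (shift c w) = (\<lambda>v. v + c) ` set w"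
  "shift c w = [] \<longleftrightarrow> w = []" "shift c (l @ a # r) = shift c l @ (a + c) # shift c r"
  "shift d (shift c w) = shift (c + d) w" "shift 0 w = w"
  by (auto simp: shift_def add.assoc)

lemma Min_shift: "w \<noteq> [] \<Longrightarrow> Min (set (shift c w)) = Min (set w) + c"
  by (simp add: mono_Min_commute[symmetric] mono_def)

lemma Max_shift: "w \<noteq> [] \<Longrightarrow> Max (set (shift c w)) = Max (set w) + c"
  by (simp add: mono_Max_commute[symmetric] mono_def)

lemma Des_shift [simp]: "Des (shift c w) = Des w"
  unfolding shift_def by (rule Des_map_strict_mono[OF strict_mono_add])

lemma map_split:
  assumes "strict_mono (f :: int \<Rightarrow> int)" "\<forall>x\<in>set l. a < x" "\<forall>x\<in>set r. a \<le> x"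
  shows "\<forall>x\<in>set (map f l). f a < x" "\<forall>x\<in>set (map f r). f a \<le> x"
  using assms(2,3) strict_mono_less[OF assms(1)] strict_mono_less_eq[OF assms(1)] by auto

lemma andreI_map_strict_mono:
  assumes f: "strict_mono (f :: int \<Rightarrow> int)"
  shows "andreI (map f w) = andreI w"
proof (induction w rule: min_split_induct)
  case (short w)
  then show ?case by (simp add: andreI_short)
next
  case (split l a r)
  have "Max (f ` set (l @ r)) = f (Max (set (l @ r)))"
    using split(3) by (intro mono_Max_commute[symmetric] strict_mono_mono[OF f]) auto
  then have "Max (set (map f (l @ r))) \<in> set (map f r) \<longleftrightarrow> Max (set (l @ r)) \<in> set r"
    using inj_image_mem_iff[OF strict_mono_imp_inj_on[OF f]] by (simp only: set_map)
  then show ?case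
    using split andreI_split[OF map_split[OF f split(1,2)]] andreI_split[OF split(1-3)] by simp
qed

lemma weak_andreII_map_strict_mono:
  assumes f: "strict_mono (f :: int \<Rightarrow> int)"
  shows "weak_andreII (map f w) = weak_andreII w"
proof (induction w rule: min_split_induct)
  case (short w)
  then show ?case by (simp add: weak_andreII_short)
next
  case (split l a r)
  have Min_map: "xs \<noteq> [] \<Longrightarrow> Min (f ` set xs) = f (Min (set xs))" for xs
    by (simp add: mono_Min_commute strict_mono_mono[OF f])
  have "l \<noteq> [] \<Longrightarrow> r \<noteq> [] \<Longrightarrow> Min (set (map f r)) < Min (set (map f l)) \<longleftrightarrow> Min (set r) < Min (set l)"
    by (simp add: Min_map strict_mono_less[OF f] del: Min_gr_iff)
  then show ?case
    using split weak_andreII_split[OF map_split[OF f split(1,2)]] weak_andreII_split[OF split(1-3)] by auto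
qed

lemma andreI_shift [simp]: "andreI (shift c w) = andreI w"
  unfolding shift_def by (rule andreI_map_strict_mono[OF strict_mono_add])

lemma weak_andreII_shift [simp]: "weak_andreII (shift c w) = weak_andreII w"
  unfolding shift_def by (rule weak_andreII_map_strict_mono[OF strict_mono_add])

text \<open>Both maps keep the minimal letter \<open>a\<close> of \<open>l @ a # r\<close> in place and translate the
  recursively transformed parts: \<open>to_andreI m\<close> lifts the right part until its largest letter
  is \<open>m - b\<close> and lowers the left part by the same \<open>b\<close> that separates the minima of right
  part and \<open>a\<close>; \<open>to_andreII m\<close> undoes these translations.\<close>

function to_andreI :: "int \<Rightarrow> int list \<Rightarrow> int list" where
  "to_andreI m w = (if length w \<le> 1 then w else
    (let a = Min (set w); t = to_andreI m (left_part w); u = to_andreI m (right_part w);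
         b = Min (set u) - a
     in shift (- b) t @ a # shift (m - b - Max (set u)) u))"
  by pat_completeness auto
termination
  by (relation "measure (\<lambda>(m, w). length w)") (auto intro!: left_part_shorter right_part_shorter)

function to_andreII :: "int \<Rightarrow> int list \<Rightarrow> int list" where
  "to_andreII m w = (if length w \<le> 1 then w else
    (let a = Min (set w); l = left_part w; r = right_part w; b = m - Max (set r)
     in to_andreII m (shift b l) @ a # to_andreII m (shift (a + b - Min (set r)) r)))"
  by pat_completeness auto
termination
  by (relation "measure (\<lambda>(m, w). length w)") (auto intro!: left_part_shorter right_part_shorter)

declare to_andreI.simps [simp del] to_andreII.simps [simp del]

lemma to_andreI_short: "length w \<le> 1 \<Longrightarrow> to_andreI m w = w"
  by (subst to_andreI.simps) simp

lemma to_andreII_short: "length w \<le> 1 \<Longrightarrow> to_andreII m w = w"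
  by (subst to_andreII.simps) simp

lemma to_andreI_split:
  assumes "\<forall>x\<in>set l. a < x" "\<forall>x\<in>set r. a \<le> x" "l \<noteq> [] \<or> r \<noteq> []"
  shows "to_andreI m (l @ a # r) =
    shift (a - Min (set (to_andreI m r))) (to_andreI m l) @ a #
    shift (m + a - Min (set (to_andreI m r)) - Max (set (to_andreI m r))) (to_andreI m r)"
  using assms(3) unfolding to_andreI.simps[of m "l @ a # r"] Let_def
    Min_split[OF assms(1,2)] left_part_split[OF assms(1,2)] right_part_split[OF assms(1,2)]
  by (auto simp: algebra_simps)

lemma to_andreII_split:
  assumes "\<forall>x\<in>set l. a < x" "\<forall>x\<in>set r. a \<le> x" "l \<noteq> [] \<or> r \<noteq> []"
  shows "to_andreII m (l @ a # r) =
    to_andreII m (shift (m - Max (set r)) l) @ a # to_andreII m (shift (m + a - Max (set r) - Min (set r)) r)"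
  using assms(3) unfolding to_andreII.simps[of m "l @ a # r"] Let_def
    Min_split[OF assms(1,2)] left_part_split[OF assms(1,2)] right_part_split[OF assms(1,2)]
  by (auto simp: algebra_simps)

definition agrees_below :: "int \<Rightarrow> int list \<Rightarrow> int list \<Rightarrow> bool" where
  "agrees_below m w v \<longleftrightarrow> length v = length w \<and> Min (set v) = Min (set w) \<and> set v \<subseteq> {..m}"

lemma agrees_below_Nil: "agrees_below m [] v \<longleftrightarrow> v = []"
  unfolding agrees_below_def by auto

lemma to_andreI_step:
  assumes split: "\<forall>x\<in>set l. a < x" "\<forall>x\<in>set r. a \<le> x"
    and r: "r \<noteq> []" "l \<noteq> [] \<Longrightarrow> Min (set r) < Min (set l)" and "a \<le> m"
    and t: "andreI t" "agrees_below m l t" "Des t = Des l"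
    and u: "andreI u" "agrees_below m r u" "Des u = Des r"
  defines "t' \<equiv> shift (a - Min (set u)) t" and "u' \<equiv> shift (m + a - Min (set u) - Max (set u)) u"
  shows "andreI (t' @ a # u')" "agrees_below m (l @ a # r) (t' @ a # u')"
    "Des (t' @ a # u') = Des (l @ a # r)"
    "to_andreII m (t' @ a # u') = to_andreII m t @ a # to_andreII m u"
proof -
  have u_ne: "u \<noteq> []" and t_Nil: "t = [] \<longleftrightarrow> l = []" and lengths: "length t = length l"
    using r(1) t(2) u(2) unfolding agrees_below_def by auto
  have Min_u: "Min (set u) = Min (set r)" "a \<le> Min (set u)" and Max_u: "Max (set u) \<le> m"
    using u(2) u_ne r(1) split(2) unfolding agrees_below_def by auto
  have t_le: "x \<le> m" and t_gt: "Min (set u) < x" if "x \<in> set t" for x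
  proof -
    show "x \<le> m" using that t(2) unfolding agrees_below_def by auto
    have "Min (set r) < Min (set l)" "Min (set l) \<le> x"
      using that r(2) t_Nil t(2) Min_le[OF finite_set that] unfolding agrees_below_def by auto
    then show "Min (set u) < x" using Min_u by simp
  qed
  have Min_u': "Min (set u') = m + a - Max (set u)" and Max_u': "Max (set u') = m + a - Min (set u)"
    unfolding u'_def using u_ne by (simp_all add: Min_shift Max_shift del: shift_simps(2))
  have split': "\<forall>x\<in>set t'. a < x" "\<forall>x\<in>set u'. a \<le> x"
    using t_gt Min_u' Max_u Min_le[of "set u'"] unfolding t'_def by (auto simp del: shift_simps(2)) force+
  have t'_le: "x \<le> Max (set u')" if "x \<in> set t'" for x
    using that t_le Max_u' unfolding t'_def by auto
  have ne: "t' \<noteq> [] \<or> u' \<noteq> []" using u_ne unfolding u'_def by simp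
  show "andreI (t' @ a # u')"
  proof -
    have "Max (set (t' @ u')) = Max (set u')"
      using t'_le u_ne unfolding u'_def by (intro Max_eqI) auto
    then show ?thesis
      using andreI_split[OF split' ne] t(1) u(1) u_ne unfolding t'_def u'_def by simp
  qed
  have "x \<le> m" if "x \<in> set (t' @ a # u')" for x
  proof -
    have "x \<le> Max (set u') \<or> x = a" using that t'_le Max_ge[of "set u'"] by auto
    then show ?thesis using Max_u' Min_u \<open>a \<le> m\<close> by auto
  qed
  then show "agrees_below m (l @ a # r) (t' @ a # u')"
    using Min_split[OF split'] Min_split[OF split] lengths u(2)
    unfolding agrees_below_def t'_def u'_def by auto
  show "Des (t' @ a # u') = Des (l @ a # r)"
    using Des_split[OF split'] Des_split[OF split] t u lengths t_Nil
    unfolding t'_def u'_def agrees_below_def by simp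
  show "to_andreII m (t' @ a # u') = to_andreII m t @ a # to_andreII m u"
    using to_andreII_split[OF split' ne] Max_u' Min_u' unfolding t'_def u'_def by simp
qed

lemma to_andreI_props:
  assumes "weak_andreII w" "set w \<subseteq> {..m}"
  shows "andreI (to_andreI m w) \<and> agrees_below m w (to_andreI m w) \<and> Des (to_andreI m w) = Des w
    \<and> to_andreII m (to_andreI m w) = w"
  using assms
proof (induction w rule: min_split_induct)
  case (short w)
  then show ?case by (simp add: to_andreI_short to_andreII_short andreI_short agrees_below_def)
next
  case (split l a r)
  have parts: "weak_andreII l" "weak_andreII r" "r \<noteq> []" "l \<noteq> [] \<Longrightarrow> Min (set r) < Min (set l)"
    using split.prems(1) weak_andreII_split[OF split.hyps] by auto
  have bounds: "set l \<subseteq> {..m}" "set r \<subseteq> {..m}" "a \<le> m" using split.prems(2) by auto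
  have IH: "andreI (to_andreI m l)" "agrees_below m l (to_andreI m l)" "Des (to_andreI m l) = Des l"
    "to_andreII m (to_andreI m l) = l"
    "andreI (to_andreI m r)" "agrees_below m r (to_andreI m r)" "Des (to_andreI m r) = Des r"
    "to_andreII m (to_andreI m r) = r"
    using split.IH parts bounds by auto
  show ?case
    using to_andreI_step[OF split.hyps(1,2) parts(3,4) bounds(3) IH(1-3) IH(5-7)] IH(4,8)
    unfolding to_andreI_split[OF split.hyps] by simp
qed

lemma to_andreII_step:
  assumes split: "\<forall>x\<in>set l. a < x" "\<forall>x\<in>set r. a \<le> x"
    and r: "r \<noteq> []" "l \<noteq> [] \<Longrightarrow> Max (set l) \<le> Max (set r)" and bounds: "set r \<subseteq> {..m}"
    and t: "weak_andreII t" "agrees_below m (shift (m - Max (set r)) l) t"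
      "to_andreI m t = shift (m - Max (set r)) l"
    and u: "weak_andreII u" "agrees_below m (shift (m + a - Max (set r) - Min (set r)) r) u"
      "to_andreI m u = shift (m + a - Max (set r) - Min (set r)) r"
  shows "weak_andreII (t @ a # u)" "agrees_below m (l @ a # r) (t @ a # u)"
    "to_andreI m (t @ a # u) = l @ a # r"
proof -
  have u_ne: "u \<noteq> []" and t_Nil: "t = [] \<longleftrightarrow> l = []"
    using r(1) t(2) u(2) unfolding agrees_below_def by auto
  have Max_r: "Max (set r) \<le> m" "a \<le> Min (set r)" using bounds r(1) split(2) by auto
  have Min_u: "Min (set u) = m + a - Max (set r)"
    using u(2) r(1) unfolding agrees_below_def by (simp add: Min_shift del: shift_simps(2))
  have Min_t: "l \<noteq> [] \<Longrightarrow> Min (set t) = Min (set l) + m - Max (set r)"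
    using t(2) unfolding agrees_below_def by (simp add: Min_shift del: shift_simps(2))
  have "a < Min (set l)" if "l \<noteq> []" using that split(1) by simp
  then have t_gt: "Min (set u) < Min (set t)" if "t \<noteq> []"
    using that t_Nil Min_t Min_u by simp
  have a_le: "a \<le> Min (set u)" using Min_u Max_r(1) by simp
  have split': "\<forall>x\<in>set t. a < x" "\<forall>x\<in>set u. a \<le> x"
    using t_gt a_le Min_le[of "set t"] Min_le[of "set u"]
    by (metis empty_iff finite_set list.set(1) order.strict_trans1 order.strict_trans2 order_trans)+
  have ne: "t \<noteq> [] \<or> u \<noteq> []" using u_ne by simp
  show "weak_andreII (t @ a # u)"
    using weak_andreII_split[OF split' ne] t(1) u(1) u_ne t_gt by simp
  show "agrees_below m (l @ a # r) (t @ a # u)"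
  proof -
    obtain x where "x \<in> set r" using r(1) by fastforce
    then have "a \<le> m" using split(2) bounds by fastforce
    then show ?thesis
      using Min_split[OF split'] Min_split[OF split] t(2) u(2) unfolding agrees_below_def by auto
  qed
  have "Min (set (to_andreI m u)) = m + a - Max (set r)" "Max (set (to_andreI m u)) = m + a - Min (set r)"
    unfolding u(3) Min_shift[OF r(1)] Max_shift[OF r(1)] by simp_all
  then show "to_andreI m (t @ a # u) = l @ a # r"
    unfolding to_andreI_split[OF split' ne] t(3) u(3) by simp
qed

lemma andreI_split_Max:
  assumes "\<forall>x\<in>set l. a < x" "\<forall>x\<in>set r. a \<le> x" "l \<noteq> [] \<or> r \<noteq> []" "andreI (l @ a # r)"
  shows "andreI l" "andreI r" "r \<noteq> []" "l \<noteq> [] \<Longrightarrow> Max (set l) \<le> Max (set r)"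
proof -
  have *: "andreI l" "andreI r" "Max (set (l @ r)) \<in> set r"
    using assms andreI_split[OF assms(1-3)] by auto
  then show "andreI l" "andreI r" "r \<noteq> []" by auto
  assume "l \<noteq> []"
  then have "Max (set l) \<le> Max (set (l @ r))" by (intro Max_mono) auto
  also have "\<dots> \<le> Max (set r)" using *(3) by simp
  finally show "Max (set l) \<le> Max (set r)" .
qed

lemma to_andreII_props:
  assumes "andreI w" "set w \<subseteq> {..m}"
  shows "weak_andreII (to_andreII m w) \<and> agrees_below m w (to_andreII m w) \<and> to_andreI m (to_andreII m w) = w"
  using assms
proof (induction w rule: length_induct)
  case (1 w)
  show ?case
  proof (cases "length w \<le> 1")
    case True
    with 1(3) show ?thesis by (simp add: to_andreI_short to_andreII_short weak_andreII_short agrees_below_def)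
  next
    case False
    then obtain l a r where w: "w = l @ a # r"
      and split: "\<forall>x\<in>set l. a < x" "\<forall>x\<in>set r. a \<le> x" "l \<noteq> [] \<or> r \<noteq> []"
      by (rule min_split_obtain)
    note parts = andreI_split_Max[OF split 1(2)[unfolded w]]
    have bounds: "set l \<subseteq> {..m}" "set r \<subseteq> {..m}" "Max (set r) \<le> m" "a \<le> Min (set r)"
      using 1(3) split(2) parts(3) unfolding w by auto
    define l' where "l' = shift (m - Max (set r)) l"
    define r' where "r' = shift (m + a - Max (set r) - Min (set r)) r"
    have "set l' \<subseteq> {..m}"
    proof
      fix x assume "x \<in> set l'"
      then obtain y where "y \<in> set l" "x = y + (m - Max (set r))" unfolding l'_def by auto
      moreover from this have "y \<le> Max (set l)" "l \<noteq> []" by auto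
      ultimately show "x \<in> {..m}" using parts(4) by fastforce
    qed
    moreover have "set r' \<subseteq> {..m}"
    proof
      fix x assume "x \<in> set r'"
      then obtain y where "y \<in> set r" "x = y + (m + a - Max (set r) - Min (set r))" unfolding r'_def by auto
      moreover from this have "y \<le> Max (set r)" by simp
      ultimately have "x \<le> m" using bounds(4) by linarith
      then show "x \<in> {..m}" by simp
    qed
    ultimately have "weak_andreII (to_andreII m l') \<and> agrees_below m l' (to_andreII m l') \<and> to_andreI m (to_andreII m l') = l'"
      "weak_andreII (to_andreII m r') \<and> agrees_below m r' (to_andreII m r') \<and> to_andreI m (to_andreII m r') = r'"
      using 1(1) parts(1,2) unfolding w l'_def r'_def by auto
    then have "weak_andreII (to_andreII m l' @ a # to_andreII m r')"
      "agrees_below m (l @ a # r) (to_andreII m l' @ a # to_andreII m r')"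
      "to_andreI m (to_andreII m l' @ a # to_andreII m r') = l @ a # r"
      using to_andreII_step[OF split(1,2) parts(3,4) bounds(2), folded l'_def r'_def] by blast+
    then show ?thesis
      unfolding w to_andreII_split[OF split] l'_def r'_def by blast
  qed
qed

lemma agrees_below_atLeastAtMost:
  assumes "agrees_below m w v" "set w \<subseteq> {0..m}"
  shows "set v \<subseteq> {0..m}"
proof (cases "w = []")
  case False
  then have "0 \<le> Min (set v)" using assms unfolding agrees_below_def by auto
  show ?thesis
  proof
    fix x assume x: "x \<in> set v"
    have "x \<le> m" using x assms(1) unfolding agrees_below_def by auto
    with Min_le[OF finite_set x] \<open>0 \<le> Min (set v)\<close> show "x \<in> {0..m}" by simp
  qed
qed (use assms in \<open>simp add: agrees_below_def\<close>)

lemma bij_betw_to_andreI: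
  "bij_betw (to_andreI m)
     {w. weak_andreII w \<and> length w = n \<and> set w \<subseteq> {0..m} \<and> Des w = D}
     {w. andreI w \<and> length w = n \<and> set w \<subseteq> {0..m} \<and> Des w = D}"
  (is "bij_betw _ ?A ?B")
proof (rule bij_betw_byWitness[where f' = "to_andreII m"])
  have I: "andreI (to_andreI m w) \<and> agrees_below m w (to_andreI m w) \<and> Des (to_andreI m w) = Des w
    \<and> to_andreII m (to_andreI m w) = w" if "weak_andreII w" "set w \<subseteq> {0..m}" for w
  proof -
    have "set w \<subseteq> {..m}" using that(2) by auto
    then show ?thesis using to_andreI_props[OF that(1)] by blast
  qed
  have II: "weak_andreII (to_andreII m w) \<and> agrees_below m w (to_andreII m w) \<and> to_andreI m (to_andreII m w) = w"
    if "andreI w" "set w \<subseteq> {0..m}" for w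
  proof -
    have "set w \<subseteq> {..m}" using that(2) by auto
    then show ?thesis using to_andreII_props[OF that(1)] by blast
  qed
  show "\<forall>w\<in>?A. to_andreII m (to_andreI m w) = w" using I by blast
  show "\<forall>w\<in>?B. to_andreI m (to_andreII m w) = w" using II by blast
  show "to_andreI m ` ?A \<subseteq> ?B"
  proof
    fix v assume "v \<in> to_andreI m ` ?A"
    then obtain w where w: "w \<in> ?A" "v = to_andreI m w" by blast
    then have v: "andreI v" "agrees_below m w v" "Des v = Des w" using I by auto
    then have "set v \<subseteq> {0..m}" using w(1) agrees_below_atLeastAtMost by blast
    then show "v \<in> ?B" using w v unfolding agrees_below_def by auto
  qed
  show "to_andreII m ` ?B \<subseteq> ?A"
  proof
    fix v assume "v \<in> to_andreII m ` ?B"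
    then obtain w where w: "w \<in> ?B" "v = to_andreII m w" by blast
    then have v: "weak_andreII v" "agrees_below m w v" "to_andreI m v = w" using II by auto
    then have "set v \<subseteq> {0..m}" using w(1) agrees_below_atLeastAtMost by blast
    then have "Des w = Des v" using I[OF v(1)] v(3) by auto
    then show "v \<in> ?A" using w v \<open>set v \<subseteq> {0..m}\<close> unfolding agrees_below_def by auto
  qed
qed

lemma map_nth_append_Cons:
  "map ((!) (xs @ x # ys)) [0..<length xs] = xs"
  "map ((!) (xs @ x # ys)) [Suc (length xs)..<Suc (length xs + length ys)] = ys"
proof -
  show "map ((!) (xs @ x # ys)) [0..<length xs] = xs"
    by (rule nth_equalityI) (simp_all add: nth_append del: upt_Suc)
  show "map ((!) (xs @ x # ys)) [Suc (length xs)..<Suc (length xs + length ys)] = ys"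
    by (rule nth_equalityI) (simp_all add: nth_append del: upt_Suc)
qed

definition standardizes :: "int list \<Rightarrow> int list \<Rightarrow> bool" where
  "standardizes S F \<longleftrightarrow> length F = length S \<and>
     (\<forall>i<length S. \<forall>j<length S. S ! i < S ! j \<longleftrightarrow> F ! i < F ! j \<or> F ! i = F ! j \<and> i < j)"

lemma standardizesD:
  "standardizes S F \<Longrightarrow> i < length S \<Longrightarrow> j < length S \<Longrightarrow>
    S ! i < S ! j \<longleftrightarrow> F ! i < F ! j \<or> F ! i = F ! j \<and> i < j"
  unfolding standardizes_def by blast

lemma standardizes_length: "standardizes S F \<Longrightarrow> length F = length S"
  unfolding standardizes_def by blast

lemma standardizes_distinct:
  assumes "standardizes S F"
  shows "distinct S"
  unfolding distinct_conv_nth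
proof (intro allI impI)
  fix i j assume "i < length S" "j < length S" "i \<noteq> j"
  then show "S ! i \<noteq> S ! j"
    using standardizesD[OF assms, of i j] standardizesD[OF assms, of j i] by auto
qed

lemma standardizes_less_iff_le:
  assumes "standardizes S F" "i < j" "j < length S"
  shows "S ! i < S ! j \<longleftrightarrow> F ! i \<le> F ! j" "S ! j < S ! i \<longleftrightarrow> F ! j < F ! i"
  using standardizesD[OF assms(1), of i j] standardizesD[OF assms(1), of j i] assms(2,3) by auto

lemma standardizes_map_nth:
  assumes "standardizes S F" "sorted_wrt (<) is" "\<forall>i\<in>set is. i < length S"
  shows "standardizes (map ((!) S) is) (map ((!) F) is)"
  unfolding standardizes_def
proof (intro conjI allI impI)
  fix i j assume "i < length (map ((!) S) is)" "j < length (map ((!) S) is)"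
  moreover from this have "is ! i < is ! j \<longleftrightarrow> i < j"
    using assms(2) by (metis length_map linorder_neqE_nat order.asym sorted_wrt_iff_nth_less)
  ultimately show "map ((!) S) is ! i < map ((!) S) is ! j \<longleftrightarrow>
      map ((!) F) is ! i < map ((!) F) is ! j \<or> map ((!) F) is ! i = map ((!) F) is ! j \<and> i < j"
    using standardizesD[OF assms(1), of "is ! i" "is ! j"] assms(3) by simp
qed simp

lemma standardizes_append_Cons:
  assumes std: "standardizes (Sl @ s # Sr) (l @ a # r)" and len: "length Sl = length l"
  shows "standardizes Sl l" "standardizes Sr r" "standardizes (Sl @ Sr) (l @ r)"
proof -
  let ?L = "[0..<length l]" and ?R = "[Suc (length l)..<Suc (length l + length r)]"
  have len_r: "length Sr = length r" using standardizes_length[OF std] len by simp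
  have S: "map ((!) (Sl @ s # Sr)) ?L = Sl" "map ((!) (Sl @ s # Sr)) ?R = Sr"
    using map_nth_append_Cons[of Sl s Sr] len len_r by simp_all
  have F: "map ((!) (l @ a # r)) ?L = l" "map ((!) (l @ a # r)) ?R = r"
    using map_nth_append_Cons[of l a r] by simp_all
  have idx: "\<forall>i\<in>set ?L. i < length (Sl @ s # Sr)" "\<forall>i\<in>set ?R. i < length (Sl @ s # Sr)"
    using len len_r by (simp_all del: upt_Suc)
  have sorted: "sorted_wrt (<) ?L" "sorted_wrt (<) ?R" "sorted_wrt (<) (?L @ ?R)"
    by (simp_all add: sorted_wrt_append del: upt_Suc)
  show "standardizes Sl l" "standardizes Sr r" "standardizes (Sl @ Sr) (l @ r)"
    using standardizes_map_nth[OF std sorted(1) idx(1)] standardizes_map_nth[OF std sorted(2) idx(2)]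
      standardizes_map_nth[OF std sorted(3)] idx
    unfolding map_append S F set_append ball_Un by (simp_all del: upt_Suc)
qed

lemma Max_append_mem_iff:
  fixes A B :: "'a::linorder list"
  shows "Max (set (A @ B)) \<in> set B \<longleftrightarrow> (\<exists>y\<in>set B. \<forall>x\<in>set A. x \<le> y)"
proof
  assume "\<exists>y\<in>set B. \<forall>x\<in>set A. x \<le> y"
  then obtain y where y: "y \<in> set B" "\<forall>x\<in>set A. x \<le> y" by blast
  let ?M = "Max (set (A @ B))"
  have "?M \<in> set (A @ B)" using y(1) by (intro Max_in) auto
  moreover have "y \<le> ?M" using y(1) by (intro Max_ge) auto
  ultimately have "?M \<in> set B \<or> ?M = y" using y(2) by (auto intro: order.antisym)
  with y(1) show "?M \<in> set B" by auto
qed (auto intro!: bexI[of _ "Max (set (A @ B))"])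

lemma Min_append_mem_iff:
  fixes A B :: "'a::linorder list"
  shows "Min (set (A @ B)) \<in> set B \<longleftrightarrow> (\<exists>y\<in>set B. \<forall>x\<in>set A. y \<le> x)"
proof
  assume "\<exists>y\<in>set B. \<forall>x\<in>set A. y \<le> x"
  then obtain y where y: "y \<in> set B" "\<forall>x\<in>set A. y \<le> x" by blast
  let ?M = "Min (set (A @ B))"
  have "?M \<in> set (A @ B)" using y(1) by (intro Min_in) auto
  moreover have "?M \<le> y" using y(1) by (intro Min_le) auto
  ultimately have "?M \<in> set B \<or> ?M = y" using y(2) by (auto intro: order.antisym)
  with y(1) show "?M \<in> set B" by auto
qed (auto intro!: bexI[of _ "Min (set (A @ B))"])

lemma Min_less_Min_iff:
  fixes A B :: "'a::linorder list"
  shows "B \<noteq> [] \<and> (A \<noteq> [] \<longrightarrow> Min (set B) < Min (set A)) \<longleftrightarrow> (\<exists>y\<in>set B. \<forall>x\<in>set A. y < x)"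
proof
  assume "\<exists>y\<in>set B. \<forall>x\<in>set A. y < x"
  then obtain y where y: "y \<in> set B" "\<forall>x\<in>set A. y < x" by blast
  have "Min (set B) < x" if "x \<in> set A" for x
    using Min_le[OF finite_set y(1)] y(2) that by (meson order.strict_trans1)
  with y(1) show "B \<noteq> [] \<and> (A \<noteq> [] \<longrightarrow> Min (set B) < Min (set A))" by auto
qed (auto intro!: bexI[of _ "Min (set B)"])

lemma ex_ball_set_conv_nth:
  "(\<exists>y\<in>set D. \<forall>x\<in>set C. P x y) \<longleftrightarrow> (\<exists>j<length D. \<forall>i<length C. P (C ! i) (D ! j))"
  by (auto simp: in_set_conv_nth all_set_conv_all_nth) (metis nth_mem)

lemma standardizes_append_less_iff:
  assumes std: "standardizes (C @ D) (A @ B)" and len: "length C = length A"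
    and ij: "i < length A" "j < length B"
  shows "C ! i < D ! j \<longleftrightarrow> A ! i \<le> B ! j" "D ! j < C ! i \<longleftrightarrow> B ! j < A ! i"
proof -
  have "length A + j < length (C @ D)" using standardizes_length[OF std] ij by simp
  then show "C ! i < D ! j \<longleftrightarrow> A ! i \<le> B ! j" "D ! j < C ! i \<longleftrightarrow> B ! j < A ! i"
    using standardizes_less_iff_le[OF std, of i "length A + j"] ij len by (simp_all add: nth_append)
qed

lemma standardizes_Max_append:
  assumes std: "standardizes (C @ D) (A @ B)" and len: "length C = length A"
  shows "Max (set (C @ D)) \<in> set D \<longleftrightarrow> Max (set (A @ B)) \<in> set B"
proof -
  have len': "length D = length B" using standardizes_length[OF std] len by simp
  have "x \<le> y \<longleftrightarrow> x < y" if "x \<in> set C" "y \<in> set D" for x y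
    using standardizes_distinct[OF std] that by auto
  then have "Max (set (C @ D)) \<in> set D \<longleftrightarrow> (\<exists>y\<in>set D. \<forall>x\<in>set C. x < y)"
    unfolding Max_append_mem_iff by auto
  also have "\<dots> \<longleftrightarrow> (\<exists>y\<in>set B. \<forall>x\<in>set A. x \<le> y)"
    unfolding ex_ball_set_conv_nth using standardizes_append_less_iff(1)[OF std len] len len' by auto
  finally show ?thesis unfolding Max_append_mem_iff .
qed

lemma standardizes_Min_append:
  assumes std: "standardizes (C @ D) (A @ B)" and len: "length C = length A"
  shows "Min (set (C @ D)) \<in> set D \<longleftrightarrow> B \<noteq> [] \<and> (A \<noteq> [] \<longrightarrow> Min (set B) < Min (set A))"
proof -
  have len': "length D = length B" using standardizes_length[OF std] len by simp
  have "y \<le> x \<longleftrightarrow> y < x" if "x \<in> set C" "y \<in> set D" for x y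
    using standardizes_distinct[OF std] that by auto
  then have "Min (set (C @ D)) \<in> set D \<longleftrightarrow> (\<exists>y\<in>set D. \<forall>x\<in>set C. y < x)"
    unfolding Min_append_mem_iff by auto
  also have "\<dots> \<longleftrightarrow> (\<exists>y\<in>set B. \<forall>x\<in>set A. y < x)"
    unfolding ex_ball_set_conv_nth using standardizes_append_less_iff(2)[OF std len] len len' by auto
  finally show ?thesis unfolding Min_less_Min_iff .
qed

lemma standardizes_split:
  assumes std: "standardizes (Sl @ s # Sr) (l @ a # r)" and len: "length Sl = length l"
    and split: "\<forall>x\<in>set l. a < x" "\<forall>x\<in>set r. a \<le> x"
  shows "\<forall>x\<in>set Sl. s < x" "\<forall>x\<in>set Sr. s \<le> x"
proof -
  have len_r: "length Sr = length r" using standardizes_length[OF std] len by simp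
  have "s < Sl ! i" if "i < length l" for i
    using standardizes_less_iff_le(2)[OF std that] that len split(1)
    by (simp add: nth_append)
  moreover have "s < Sr ! j" if "j < length r" for j
    using standardizes_less_iff_le(1)[OF std, of "length l" "Suc (length l + j)"] that len len_r split(2)
    by (simp add: nth_append)
  ultimately show "\<forall>x\<in>set Sl. s < x" "\<forall>x\<in>set Sr. s \<le> x"
    using len len_r by (auto simp: in_set_conv_nth) (metis less_imp_le)
qed

lemma andre_standardizes:
  "standardizes S F \<Longrightarrow> andreI S = andreI F \<and> andreII S = weak_andreII F"
proof (induction F arbitrary: S rule: min_split_induct)
  case (short F)
  then show ?case using standardizes_length[OF short(2)]
    by (simp add: andreI_short andreII_short weak_andreII_short)
next
  case (split l a r)
  have "length l < length S" using standardizes_length[OF split.prems] by simp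
  then obtain Sl s Sr where S: "S = Sl @ s # Sr" and len: "length Sl = length l"
    using id_take_nth_drop[of "length l" S] by (metis length_take min.absorb4)
  note std = split.prems[unfolded S]
  note parts = standardizes_append_Cons[OF std len]
  note split_S = standardizes_split[OF std len split.hyps(1,2)]
  have ne_S: "Sl \<noteq> [] \<or> Sr \<noteq> []"
    using split.hyps(3) len standardizes_length[OF parts(2)] by auto
  show ?case
    unfolding S andreI_split[OF split.hyps] andreII_split[OF split_S ne_S] andreI_split[OF split_S ne_S]
      weak_andreII_split[OF split.hyps]
    using split.IH(1)[OF parts(1)] split.IH(2)[OF parts(2)]
      standardizes_Max_append[OF parts(3) len] standardizes_Min_append[OF parts(3) len]
    by auto
qed

lemma Des_standardizes:
  assumes "standardizes S F"
  shows "Des S = Des F"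
proof (rule set_eqI)
  fix j
  note len = standardizes_length[OF assms]
  show "j \<in> Des S \<longleftrightarrow> j \<in> Des F"
  proof (cases "0 < j \<and> j < length S")
    case True
    then have "S ! j < S ! (j - 1) \<longleftrightarrow> F ! j < F ! (j - 1)"
      using standardizes_less_iff_le(2)[OF assms, of "j - 1" j] by simp
    then show ?thesis unfolding mem_Des_iff using len by simp
  qed (use len in \<open>auto simp: mem_Des_iff\<close>)
qed

lemma length_perms: "S \<in> perms n \<Longrightarrow> length S = n"
  unfolding perms_def using distinct_card by fastforce

lemma finite_perms: "finite (perms n)"
proof (rule finite_subset)
  show "perms n \<subseteq> {S. set S \<subseteq> {1..int n} \<and> length S = n}"
    using length_perms unfolding perms_def by blast
qed (simp add: finite_lists_length_eq)

lemma perms_nth_eq_card: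
  assumes S: "S \<in> perms n" and i: "i < n"
  shows "S ! i = int (card {j. j < n \<and> S ! j < S ! i}) + 1"
proof -
  have len: "length S = n" and dist: "distinct S" and set_S: "set S = {1..int n}"
    using S length_perms unfolding perms_def by auto
  have Si: "S ! i \<in> {1..int n}" using set_S len i nth_mem by blast
  have inj: "inj_on ((!) S) {j. j < n \<and> S ! j < S ! i}"
    using dist len by (auto simp: inj_on_def nth_eq_iff_index_eq)
  have img: "(!) S ` {j. j < n \<and> S ! j < S ! i} = {1..S ! i - 1}"
  proof -
    have "(!) S ` {j. j < n \<and> S ! j < S ! i} = {v \<in> set S. v < S ! i}"
      using len by (auto simp: in_set_conv_nth)
    also have "\<dots> = {1..S ! i - 1}" using set_S Si by auto
    finally show ?thesis .
  qed
  have "card {j. j < n \<and> S ! j < S ! i} = card {1..S ! i - 1}"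
    using card_image[OF inj] unfolding img by simp
  with Si show ?thesis by simp
qed

lemma standardizes_unique:
  assumes "S \<in> perms n" "S' \<in> perms n" "standardizes S F" "standardizes S' F"
  shows "S = S'"
proof (rule nth_equalityI)
  have len: "length S = n" "length S' = n" using assms(1,2) length_perms by auto
  then show "length S = length S'" by simp
  fix i assume "i < length S"
  then have "{j. j < n \<and> S ! j < S ! i} = {j. j < n \<and> S' ! j < S' ! i}"
    using standardizesD[OF assms(3)] standardizesD[OF assms(4)] len by auto
  moreover have "i < n" using \<open>i < length S\<close> len by simp
  ultimately show "S ! i = S' ! i"
    using perms_nth_eq_card[OF assms(1), of i] perms_nth_eq_card[OF assms(2), of i] by simp
qed

lemma standardization_exists:
  obtains S where "S \<in> perms (length F)" "standardizes S F"
proof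
  let ?n = "length F"
  define before where "before j i \<longleftrightarrow> F ! j < F ! i \<or> F ! j = F ! i \<and> j < i" for i j
  define A where "A i = {j. j < ?n \<and> before j i}" for i
  define S where "S = map (\<lambda>i. int (card (A i)) + 1) [0..<?n]"
  have before_trans: "before k i" if "before k j" "before j i" for i j k
    using that unfolding before_def by auto
  have A_psubset: "A j \<subset> A i" if "j < ?n" "before j i" for i j
  proof -
    have "A j \<subseteq> A i" using before_trans that(2) unfolding A_def by blast
    moreover have "j \<in> A i" "j \<notin> A j" using that unfolding A_def before_def by auto
    ultimately show ?thesis by blast
  qed
  have S_nth: "S ! i = int (card (A i)) + 1" if "i < ?n" for i
    using that unfolding S_def by simp
  show std: "standardizes S F"
    unfolding standardizes_def
  proof (intro conjI allI impI)
    fix i j assume "i < length S" "j < length S"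
    then have ij: "i < ?n" "j < ?n" unfolding S_def by auto
    have fin: "finite (A k)" for k unfolding A_def by simp
    have "card (A i) < card (A j) \<longleftrightarrow> before i j"
    proof
      assume "before i j"
      then show "card (A i) < card (A j)" by (rule psubset_card_mono[OF fin A_psubset[OF ij(1)]])
    next
      assume less: "card (A i) < card (A j)"
      show "before i j"
      proof (rule ccontr)
        assume "\<not> before i j"
        then have "i = j \<or> before j i" unfolding before_def by auto
        then have "card (A j) \<le> card (A i)"
        proof
          assume "before j i"
          then show ?thesis by (intro less_imp_le psubset_card_mono[OF fin A_psubset[OF ij(2)]])
        qed simp
        with less show False by simp
      qed
    qed
    moreover have "S ! i < S ! j \<longleftrightarrow> card (A i) < card (A j)"
      unfolding S_nth[OF ij(1)] S_nth[OF ij(2)] by (simp only: add_less_cancel_right of_nat_less_iff)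
    ultimately show "S ! i < S ! j \<longleftrightarrow> F ! i < F ! j \<or> F ! i = F ! j \<and> i < j"
      unfolding before_def by simp
  qed (simp add: S_def)
  have "S ! i \<in> {1..int ?n}" if "i < ?n" for i
  proof -
    have "A i \<subset> {..<?n}" using that unfolding A_def before_def by auto
    then have "card (A i) < ?n" by (metis card_lessThan finite_lessThan psubset_card_mono)
    then show ?thesis using S_nth[OF that] by simp
  qed
  then have "set S \<subseteq> {1..int ?n}" unfolding S_def by auto
  moreover have "card (set S) = card {1..int ?n}"
    using distinct_card[OF standardizes_distinct[OF std]] unfolding S_def by simp
  ultimately have "set S = {1..int ?n}" by (simp add: card_subset_eq)
  then show "S \<in> perms ?n" using standardizes_distinct[OF std] unfolding perms_def by simp
qed

definition std_fibre :: "int list \<Rightarrow> int \<Rightarrow> int list set" where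
  "std_fibre S m = {F. standardizes S F \<and> set F \<subseteq> {0..m}}"

lemma card_by_standardization:
  assumes invariant: "\<And>S F. standardizes S F \<Longrightarrow> P F \<longleftrightarrow> Q S"
  shows "card {F. length F = n \<and> set F \<subseteq> {0..m} \<and> P F} = (\<Sum>S | S \<in> perms n \<and> Q S. card (std_fibre S m))"
proof -
  have "{F. length F = n \<and> set F \<subseteq> {0..m} \<and> P F} = (\<Union>S\<in>{S. S \<in> perms n \<and> Q S}. std_fibre S m)"
  proof (intro set_eqI iffI)
    fix F assume F: "F \<in> {F. length F = n \<and> set F \<subseteq> {0..m} \<and> P F}"
    obtain S where "S \<in> perms (length F)" "standardizes S F" by (rule standardization_exists)
    then show "F \<in> (\<Union>S\<in>{S. S \<in> perms n \<and> Q S}. std_fibre S m)"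
      using F invariant unfolding std_fibre_def by auto
  next
    fix F assume "F \<in> (\<Union>S\<in>{S. S \<in> perms n \<and> Q S}. std_fibre S m)"
    then obtain S where "S \<in> perms n" "Q S" "standardizes S F" "set F \<subseteq> {0..m}"
      unfolding std_fibre_def by auto
    then show "F \<in> {F. length F = n \<and> set F \<subseteq> {0..m} \<and> P F}"
      using invariant standardizes_length length_perms by auto
  qed
  moreover have "finite (std_fibre S m)" for S
  proof (rule finite_subset)
    show "std_fibre S m \<subseteq> {F. set F \<subseteq> {0..m} \<and> length F = length S}"
      unfolding std_fibre_def using standardizes_length by auto
  qed (simp add: finite_lists_length_eq)
  moreover have "std_fibre S m \<inter> std_fibre S' m = {}" if "S \<in> perms n" "S' \<in> perms n" "S \<noteq> S'" for S S'
    using standardizes_unique[OF that(1,2)] that(3) unfolding std_fibre_def by auto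
  ultimately show ?thesis
    by (simp add: card_UN_disjoint finite_perms)
qed

text \<open>Letters and positions counted from \<open>0\<close>: \<open>pos S\<close> is the inverse of \<open>S\<close> read as a
  permutation of \<open>{0..<n}\<close>, so that \<open>inv_word S ! v = int (Suc (pos S v))\<close>.\<close>

definition pos :: "int list \<Rightarrow> nat \<Rightarrow> nat" where
  "pos S v = (THE i. i < length S \<and> S ! i = int (Suc v))"

lemma pos_eqI:
  assumes "S \<in> perms n" "i < n" "S ! i = int (Suc v)"
  shows "pos S v = i"
  unfolding pos_def
proof (rule the_equality)
  show "i < length S \<and> S ! i = int (Suc v)" using assms length_perms by auto
  have "distinct S" "length S = n" using assms(1) length_perms unfolding perms_def by auto
  then show "j = i" if "j < length S \<and> S ! j = int (Suc v)" for j
    using that assms(2,3) nth_eq_iff_index_eq[of S j i] by simp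
qed

lemma pos_perms:
  assumes "S \<in> perms n" "v < n"
  shows "pos S v < n" "S ! pos S v = int (Suc v)"
proof -
  have "int (Suc v) \<in> set S" using assms unfolding perms_def by auto
  then obtain i where "i < n" "S ! i = int (Suc v)"
    using length_perms[OF assms(1)] by (auto simp: in_set_conv_nth)
  with pos_eqI[OF assms(1) this] show "pos S v < n" "S ! pos S v = int (Suc v)" by simp_all
qed

lemma pos_nth:
  assumes "S \<in> perms n" "i < n"
  shows "nat (S ! i) - 1 < n" "pos S (nat (S ! i) - 1) = i"
proof -
  have "S ! i \<in> set S" using assms length_perms by simp
  then have "S ! i \<in> {1..int n}" using assms(1) unfolding perms_def by simp
  then show "nat (S ! i) - 1 < n" "pos S (nat (S ! i) - 1) = i"
    using pos_eqI[OF assms, of "nat (S ! i) - 1"] by auto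
qed

definition ides_set :: "int list \<Rightarrow> nat set" where
  "ides_set S = {v. Suc v < length S \<and> pos S (Suc v) < pos S v}"

lemma ides_set_subset: "S \<in> perms n \<Longrightarrow> ides_set S \<subseteq> {v. Suc v < n}"
  unfolding ides_set_def using length_perms by auto

lemma ides_eq_card:
  assumes S: "S \<in> perms n"
  shows "ides S = card (ides_set S)"
proof -
  have len: "length S = n" using length_perms[OF S] .
  have inv: "inv_word S ! v = int (Suc (pos S v))" if "v < n" for v
    unfolding inv_word_def pos_def using that len by (simp del: upt_Suc)
  have "Des (inv_word S) = Suc ` ides_set S"
  proof (rule set_eqI)
    fix j
    show "j \<in> Des (inv_word S) \<longleftrightarrow> j \<in> Suc ` ides_set S"
    proof (cases j)
      case (Suc v)
      then show ?thesis
        using inv[of v] inv[of "Suc v"] len unfolding ides_set_def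
        by (auto simp: Suc_mem_Des inv_word_def simp del: upt_Suc)
    qed (auto simp: zero_not_mem_Des)
  qed
  then show ?thesis unfolding ides_def des_def by (simp add: card_image)
qed

lemma sorted_equal_chain:
  fixes g :: "'a::linorder list" and P :: "nat \<Rightarrow> nat"
  assumes "sorted g" "v < length g" "g ! u = g ! v" "u < v"
    and step: "\<And>w. Suc w < length g \<Longrightarrow> g ! w = g ! Suc w \<Longrightarrow> P w < P (Suc w)"
  shows "P u < P v"
  using assms(2-4)
proof (induction v)
  case (Suc v)
  have "g ! u \<le> g ! v" "g ! v \<le> g ! Suc v"
    using Suc.prems sorted_nth_mono[OF assms(1), of u v] sorted_nth_mono[OF assms(1), of v "Suc v"] by simp_all
  then have "g ! v = g ! Suc v" using Suc.prems(2) by (intro order.antisym) simp_all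
  with step Suc show ?case by (cases "u = v") (auto intro: less_trans)
qed simp

lemma lex_index_order_iff_sorted:
  fixes g :: "'a::linorder list" and P :: "nat \<Rightarrow> nat"
  assumes inj: "inj_on P {..<length g}"
  shows "(\<forall>u<length g. \<forall>v<length g. u < v \<longleftrightarrow> g ! u < g ! v \<or> g ! u = g ! v \<and> P u < P v)
    \<longleftrightarrow> sorted g \<and> (\<forall>v. Suc v < length g \<longrightarrow> P (Suc v) < P v \<longrightarrow> g ! v < g ! Suc v)"
    (is "?lex \<longleftrightarrow> ?sorted")
proof
  assume lex: ?lex
  have "g ! v < g ! Suc v \<or> g ! v = g ! Suc v \<and> P v < P (Suc v)" if "Suc v < length g" for v
    using lex[rule_format, of v "Suc v"] that by simp
  then show ?sorted unfolding sorted_iff_nth_Suc by force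
next
  assume ?sorted
  then have sorted: "sorted g" and strict: "\<And>v. Suc v < length g \<Longrightarrow> P (Suc v) < P v \<Longrightarrow> g ! v < g ! Suc v"
    by auto
  have step: "P w < P (Suc w)" if "Suc w < length g" "g ! w = g ! Suc w" for w
  proof -
    have "P w \<noteq> P (Suc w)" using inj_onD[OF inj, of w "Suc w"] that(1) by auto
    moreover have "\<not> P (Suc w) < P w" using strict[OF that(1)] that(2) by auto
    ultimately show ?thesis by simp
  qed
  have "u < v \<longleftrightarrow> g ! u < g ! v \<or> g ! u = g ! v \<and> P u < P v" if "u < length g" "v < length g" for u v
  proof (cases u v rule: linorder_cases)
    case less
    have "g ! u = g ! v \<Longrightarrow> P u < P v" using sorted_equal_chain[of g v u P] sorted that less step by blast
    then show ?thesis using sorted_nth_mono[OF sorted, of u v] less that by auto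
  next
    case greater
    have "g ! v = g ! u \<Longrightarrow> P v < P u" using sorted_equal_chain[of g u v P] sorted that greater step by blast
    then show ?thesis using sorted_nth_mono[OF sorted, of v u] greater that by auto
  qed simp
  then show ?lex by blast
qed

lemma standardizes_iff_sorted:
  assumes S: "S \<in> perms n" and F: "length F = n"
  defines "g \<equiv> map (\<lambda>v. F ! pos S v) [0..<n]"
  shows "standardizes S F \<longleftrightarrow> sorted g \<and> (\<forall>v\<in>ides_set S. g ! v < g ! Suc v)"
proof -
  have len: "length S = n" using length_perms[OF S] .
  note pos = pos_perms[OF S]
  have "standardizes S F \<longleftrightarrow>
      (\<forall>u<n. \<forall>v<n. u < v \<longleftrightarrow> g ! u < g ! v \<or> g ! u = g ! v \<and> pos S u < pos S v)"
  proof
    assume std: "standardizes S F"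
    show "\<forall>u<n. \<forall>v<n. u < v \<longleftrightarrow> g ! u < g ! v \<or> g ! u = g ! v \<and> pos S u < pos S v"
    proof (intro allI impI)
      fix u v assume uv: "u < n" "v < n"
      have "S ! pos S u < S ! pos S v \<longleftrightarrow> u < v" using pos(2) uv by simp
      then show "u < v \<longleftrightarrow> g ! u < g ! v \<or> g ! u = g ! v \<and> pos S u < pos S v"
        using standardizesD[OF std, of "pos S u" "pos S v"] pos(1) uv len unfolding g_def by simp
    qed
  next
    assume lex: "\<forall>u<n. \<forall>v<n. u < v \<longleftrightarrow> g ! u < g ! v \<or> g ! u = g ! v \<and> pos S u < pos S v"
    have "S ! i < S ! j \<longleftrightarrow> F ! i < F ! j \<or> F ! i = F ! j \<and> i < j" if "i < n" "j < n" for i j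
    proof -
      define u v where "u = nat (S ! i) - 1" and "v = nat (S ! j) - 1"
      have uv: "u < n" "v < n" "pos S u = i" "pos S v = j"
        using pos_nth[OF S that(1)] pos_nth[OF S that(2)] unfolding u_def v_def by auto
      then have "S ! i = int (Suc u)" "S ! j = int (Suc v)" using pos(2) by auto
      then show ?thesis using lex[rule_format, OF uv(1,2)] uv unfolding g_def by simp
    qed
    then show "standardizes S F" unfolding standardizes_def using F len by simp
  qed
  also have "\<dots> \<longleftrightarrow> sorted g \<and> (\<forall>v. Suc v < n \<longrightarrow> pos S (Suc v) < pos S v \<longrightarrow> g ! v < g ! Suc v)"
  proof -
    have "inj_on (pos S) {..<n}"
      using pos(2) by (intro inj_onI) (metis lessThan_iff nat.inject of_nat_eq_iff)
    then show ?thesis using lex_index_order_iff_sorted[of "pos S" g] unfolding g_def by simp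
  qed
  finally show ?thesis unfolding ides_set_def len by auto
qed

definition sorted_words :: "nat \<Rightarrow> int \<Rightarrow> int list set" where
  "sorted_words n r = {g. length g = n \<and> sorted g \<and> set g \<subseteq> {0..r}}"

definition sorted_words_strict_at :: "nat \<Rightarrow> int \<Rightarrow> nat set \<Rightarrow> int list set" where
  "sorted_words_strict_at n m J = {g \<in> sorted_words n m. \<forall>v\<in>J. g ! v < g ! Suc v}"

lemma card_std_fibre:
  assumes S: "S \<in> perms n"
  shows "card (std_fibre S m) = card (sorted_words_strict_at n m (ides_set S))"
proof -
  have len: "length S = n" using length_perms[OF S] .
  define \<phi> where "\<phi> F = map (\<lambda>v. F ! pos S v) [0..<n]" for F :: "int list"
  define \<psi> where "\<psi> g = map (\<lambda>x. g ! (nat x - 1)) S" for g :: "int list"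
  have len_\<phi>: "length (\<phi> F) = n" for F unfolding \<phi>_def by simp
  have \<psi>_\<phi>: "\<psi> (\<phi> F) = F" if "length F = n" for F
    using that pos_nth[OF S] len unfolding \<psi>_def \<phi>_def by (simp add: list_eq_iff_nth_eq)
  have \<phi>_\<psi>: "\<phi> (\<psi> g) = g" if "length g = n" for g
    using that pos_perms[OF S] len unfolding \<psi>_def \<phi>_def by (simp add: list_eq_iff_nth_eq nat_add_distrib)
  have set_\<phi>: "set (\<phi> F) = set F" if "length F = n" for F
  proof
    show "set (\<phi> F) \<subseteq> set F" using that pos_perms(1)[OF S] unfolding \<phi>_def by auto
    show "set F \<subseteq> set (\<phi> F)"
    proof
      fix x assume "x \<in> set F"
      then have "\<exists>i<n. F ! i = x" using that by (simp add: in_set_conv_nth)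
      then obtain i where i: "i < n" "x = F ! i" by blast
      then have "x = \<phi> F ! (nat (S ! i) - 1)" "nat (S ! i) - 1 < length (\<phi> F)"
        using pos_nth[OF S i(1)] unfolding \<phi>_def by simp_all
      then show "x \<in> set (\<phi> F)" by simp
    qed
  qed
  have fibre: "F \<in> std_fibre S m \<longleftrightarrow> length F = n \<and> \<phi> F \<in> sorted_words_strict_at n m (ides_set S)" for F
    using standardizes_iff_sorted[OF S, of F] standardizes_length[of S F] set_\<phi>[of F] len len_\<phi>
    unfolding std_fibre_def sorted_words_strict_at_def sorted_words_def \<phi>_def[symmetric] by auto
  have "bij_betw \<phi> (std_fibre S m) (sorted_words_strict_at n m (ides_set S))"
  proof (rule bij_betw_byWitness[where f' = \<psi>])
    show "\<forall>F\<in>std_fibre S m. \<psi> (\<phi> F) = F" using fibre \<psi>_\<phi> by blast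
    show "\<forall>g\<in>sorted_words_strict_at n m (ides_set S). \<phi> (\<psi> g) = g"
      using \<phi>_\<psi> unfolding sorted_words_strict_at_def sorted_words_def by blast
    show "\<phi> ` std_fibre S m \<subseteq> sorted_words_strict_at n m (ides_set S)" using fibre by blast
    show "\<psi> ` sorted_words_strict_at n m (ides_set S) \<subseteq> std_fibre S m"
    proof
      fix F assume "F \<in> \<psi> ` sorted_words_strict_at n m (ides_set S)"
      then obtain g where g: "g \<in> sorted_words_strict_at n m (ides_set S)" "F = \<psi> g" by blast
      then have "length F = n" "\<phi> F = g"
        using \<phi>_\<psi> len unfolding sorted_words_strict_at_def sorted_words_def \<psi>_def by auto
      then show "F \<in> std_fibre S m" using fibre g(1) by simp
    qed
  qed
  then show ?thesis by (rule bij_betw_same_card)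
qed

lemma sorted_subset_atLeastAtMost_iff:
  fixes g :: "'a::linorder list"
  assumes "sorted g" "g \<noteq> []"
  shows "set g \<subseteq> {lo..hi} \<longleftrightarrow> lo \<le> g ! 0 \<and> g ! (length g - 1) \<le> hi"
proof
  assume "lo \<le> g ! 0 \<and> g ! (length g - 1) \<le> hi"
  moreover have "g ! 0 \<le> g ! i" "g ! i \<le> g ! (length g - 1)" if "i < length g" for i
    using that sorted_nth_mono[OF assms(1)] by auto
  ultimately show "set g \<subseteq> {lo..hi}" by (auto simp: in_set_conv_nth) (meson order_trans)+
next
  assume "set g \<subseteq> {lo..hi}"
  moreover have "g ! 0 \<in> set g" "g ! (length g - 1) \<in> set g" using assms(2) by auto
  ultimately show "lo \<le> g ! 0 \<and> g ! (length g - 1) \<le> hi" by auto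
qed

lemma card_sorted_words_strict_at:
  assumes J: "J \<subseteq> {v. Suc v < n}"
  shows "card (sorted_words_strict_at n m J) = card (sorted_words n (m - int (card J)))"
proof -
  define c where "c i = int (card {v \<in> J. v < i})" for i
  have c_Suc: "c (Suc i) = c i + (if i \<in> J then 1 else 0)" for i
  proof -
    have "{v \<in> J. v < Suc i} = {v \<in> J. v < i} \<union> (if i \<in> J then {i} else {})" by (auto simp: less_Suc_eq)
    then show ?thesis unfolding c_def by (auto simp: card_insert_if)
  qed
  have c_last: "c (n - 1) = int (card J)" "c 0 = 0"
    using J unfolding c_def by (auto intro!: arg_cong[where f = card])
  define lower where "lower g = map (\<lambda>i. g ! i - c i) [0..<n]" for g
  define raise where "raise g = map (\<lambda>i. g ! i + c i) [0..<n]" for g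
  have sorted_lower: "sorted (lower g) \<longleftrightarrow> sorted g \<and> (\<forall>v\<in>J. g ! v < g ! Suc v)" if "length g = n" for g
    using that J unfolding lower_def sorted_iff_nth_Suc by (auto simp: c_Suc split: if_splits)
  have ends: "lower g ! 0 = g ! 0" "lower g ! (n - 1) = g ! (n - 1) - int (card J)"
    "raise g ! 0 = g ! 0" "raise g ! (n - 1) = g ! (n - 1) + int (card J)" if "n \<noteq> 0" for g
    using that c_last unfolding lower_def raise_def by simp_all
  have "bij_betw lower (sorted_words_strict_at n m J) (sorted_words n (m - int (card J)))"
  proof (rule bij_betw_byWitness[where f' = raise])
    show "\<forall>g\<in>sorted_words_strict_at n m J. raise (lower g) = g"
      unfolding sorted_words_strict_at_def sorted_words_def lower_def raise_def
      by (simp add: list_eq_iff_nth_eq)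
    show "\<forall>g\<in>sorted_words n (m - int (card J)). lower (raise g) = g"
      unfolding sorted_words_def lower_def raise_def by (simp add: list_eq_iff_nth_eq)
    show "lower ` sorted_words_strict_at n m J \<subseteq> sorted_words n (m - int (card J))"
    proof
      fix h assume "h \<in> lower ` sorted_words_strict_at n m J"
      then obtain g where g: "length g = n" "sorted g" "set g \<subseteq> {0..m}" "\<forall>v\<in>J. g ! v < g ! Suc v"
        and h: "h = lower g"
        unfolding sorted_words_strict_at_def sorted_words_def by blast
      have len: "length h = n" and sorted: "sorted h" using g sorted_lower unfolding h lower_def by auto
      moreover have "set h \<subseteq> {0..m - int (card J)}" if "n \<noteq> 0"
      proof -
        have "g \<noteq> []" "h \<noteq> []" using that g(1) len by auto
        then show ?thesis
          using g(3) ends[OF that, of g] g(1) h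
          unfolding sorted_subset_atLeastAtMost_iff[OF sorted \<open>h \<noteq> []\<close>]
            sorted_subset_atLeastAtMost_iff[OF g(2) \<open>g \<noteq> []\<close>] len by simp
      qed
      ultimately show "h \<in> sorted_words n (m - int (card J))"
        unfolding sorted_words_def by (cases "n = 0") auto
    qed
    show "raise ` sorted_words n (m - int (card J)) \<subseteq> sorted_words_strict_at n m J"
    proof
      fix h assume "h \<in> raise ` sorted_words n (m - int (card J))"
      then obtain g where g: "length g = n" "sorted g" "set g \<subseteq> {0..m - int (card J)}"
        and h: "h = raise g"
        unfolding sorted_words_def by blast
      have len: "length h = n" unfolding h raise_def by simp
      have "lower h = g" using g(1) unfolding h lower_def raise_def by (simp add: list_eq_iff_nth_eq)
      then have sorted: "sorted h" "\<forall>v\<in>J. h ! v < h ! Suc v" using sorted_lower[OF len] g(2) by auto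
      moreover have "set h \<subseteq> {0..m}" if "n \<noteq> 0"
      proof -
        have "g \<noteq> []" "h \<noteq> []" using that g(1) len by auto
        then show ?thesis
          using g(3) ends[OF that, of g] g(1) h
          unfolding sorted_subset_atLeastAtMost_iff[OF sorted(1) \<open>h \<noteq> []\<close>]
            sorted_subset_atLeastAtMost_iff[OF g(2) \<open>g \<noteq> []\<close>] len by simp
      qed
      ultimately show "h \<in> sorted_words_strict_at n m J"
        using len unfolding sorted_words_strict_at_def sorted_words_def by (cases "n = 0") auto
    qed
  qed
  then show ?thesis by (rule bij_betw_same_card)
qed

lemma card_std_fibre_ides:
  assumes "S \<in> perms n"
  shows "card (std_fibre S m) = card (sorted_words n (m - int (ides S)))"
  using card_std_fibre[OF assms] card_sorted_words_strict_at[OF ides_set_subset[OF assms]]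
    ides_eq_card[OF assms] by simp

lemma sorted_words_negative: "n \<ge> 1 \<Longrightarrow> r < 0 \<Longrightarrow> sorted_words n r = {}"
  unfolding sorted_words_def by auto

lemma sorted_words_zero: "sorted_words n 0 = {replicate n 0}"
proof -
  have "g = replicate n 0" if "length g = n" "set g \<subseteq> {0}" for g :: "int list"
    using that by (intro replicate_eqI) auto
  then show ?thesis unfolding sorted_words_def by (auto simp: sorted_iff_nth_Suc)
qed

lemma sum_by_value:
  assumes "finite A" "finite K" "h ` A \<subseteq> K"
  shows "(\<Sum>x\<in>A. g (h x)) = (\<Sum>j\<in>K. of_nat (card {x\<in>A. h x = j}) * g j)"
proof -
  have "(\<Sum>x\<in>A. g (h x)) = (\<Sum>j\<in>K. \<Sum>x\<in>{x\<in>A. h x = j}. g (h x))"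
    using sum.group[OF assms, of "\<lambda>x. g (h x)"] by simp
  also have "\<dots> = (\<Sum>j\<in>K. of_nat (card {x\<in>A. h x = j}) * g j)"
    by (rule sum.cong) simp_all
  finally show ?thesis .
qed

lemma triangular_inversion:
  fixes a b :: "nat \<Rightarrow> 'a::comm_semiring_1_cancel" and c :: "nat \<Rightarrow> nat \<Rightarrow> 'a"
  assumes eq: "\<And>k. (\<Sum>j\<le>N. a j * c k j) = (\<Sum>j\<le>N. b j * c k j)"
    and upper: "\<And>k j. k < j \<Longrightarrow> c k j = 0" and diagonal: "\<And>k. c k k = 1"
  shows "k \<le> N \<Longrightarrow> a k = b k"
proof (induction k rule: less_induct)
  case (less k)
  have split: "(\<Sum>j\<le>N. f j * c k j) = (\<Sum>j<k. f j * c k j) + f k" for f :: "nat \<Rightarrow> 'a"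
  proof -
    have "{..N} = {..<k} \<union> {k} \<union> {k<..N}" using less.prems by auto
    then have "(\<Sum>j\<le>N. f j * c k j) = (\<Sum>j<k. f j * c k j) + f k * c k k + (\<Sum>j\<in>{k<..N}. f j * c k j)"
      by (simp only:) (subst sum.union_disjoint; auto simp: sum.union_disjoint add_ac)
    then show ?thesis using upper diagonal by simp
  qed
  have "(\<Sum>j<k. a j * c k j) = (\<Sum>j<k. b j * c k j)"
    using less.IH less.prems by (intro sum.cong) auto
  then show ?case using eq[of k] split[of a] split[of b] by simp
qed

lemma ides_le:
  assumes "S \<in> perms n"
  shows "ides S \<le> n"
proof -
  have "ides_set S \<subseteq> {..<n}" using ides_set_subset[OF assms] by auto
  then have "card (ides_set S) \<le> n" using card_mono[of "{..<n}"] by fastforce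
  then show ?thesis using ides_eq_card[OF assms] by simp
qed

lemma card_words_andreI_andreII:
  "card {F. length F = n \<and> set F \<subseteq> {0..m} \<and> andreI F \<and> Des F = D}
    = card {F. length F = n \<and> set F \<subseteq> {0..m} \<and> weak_andreII F \<and> Des F = D}"
  using bij_betw_same_card[OF bij_betw_to_andreI[of m n D]] by (simp add: conj_ac)

lemma card_andreI_eq_card_andreII:
  assumes n: "n \<ge> 1"
  shows "card {S \<in> perms n. andreI S \<and> Des S = D \<and> ides S = k}
       = card {S \<in> perms n. andreII S \<and> Des S = D \<and> ides S = k}"
proof -
  define A where "A = {S \<in> perms n. andreI S \<and> Des S = D}"
  define B where "B = {S \<in> perms n. andreII S \<and> Des S = D}"
  define c where "c m j = card (sorted_words n (int m - int j))" for m j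
  have fin: "finite A" "finite B" unfolding A_def B_def using finite_perms by auto
  have ides_A: "ides ` A \<subseteq> {..n}" and ides_B: "ides ` B \<subseteq> {..n}"
    unfolding A_def B_def using ides_le by auto
  have "(\<Sum>S\<in>A. c m (ides S)) = (\<Sum>S\<in>B. c m (ides S))" for m
  proof -
    have "(\<Sum>S\<in>A. c m (ides S)) = (\<Sum>S\<in>A. card (std_fibre S (int m)))"
      unfolding A_def c_def by (intro sum.cong) (auto simp: card_std_fibre_ides)
    also have "\<dots> = card {F. length F = n \<and> set F \<subseteq> {0..int m} \<and> andreI F \<and> Des F = D}"
      using card_by_standardization[of "\<lambda>F. andreI F \<and> Des F = D" "\<lambda>S. andreI S \<and> Des S = D"]
        andre_standardizes Des_standardizes
      unfolding A_def by (simp add: conj_ac)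
    also have "\<dots> = card {F. length F = n \<and> set F \<subseteq> {0..int m} \<and> weak_andreII F \<and> Des F = D}"
      by (rule card_words_andreI_andreII)
    also have "\<dots> = (\<Sum>S\<in>B. card (std_fibre S (int m)))"
      using card_by_standardization[of "\<lambda>F. weak_andreII F \<and> Des F = D" "\<lambda>S. andreII S \<and> Des S = D"]
        andre_standardizes Des_standardizes
      unfolding B_def by (simp add: conj_ac)
    also have "\<dots> = (\<Sum>S\<in>B. c m (ides S))"
      unfolding B_def c_def by (intro sum.cong) (auto simp: card_std_fibre_ides)
    finally show ?thesis .
  qed
  then have sums: "(\<Sum>j\<le>n. card {S\<in>A. ides S = j} * c m j) = (\<Sum>j\<le>n. card {S\<in>B. ides S = j} * c m j)" for m
    using sum_by_value[OF fin(1) _ ides_A, of "c m"] sum_by_value[OF fin(2) _ ides_B, of "c m"] by simp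
  have upper: "c k j = 0" if "k < j" for k j
    using sorted_words_negative[OF n] that unfolding c_def by simp
  have diagonal: "c k k = 1" for k
    unfolding c_def by (simp add: sorted_words_zero)
  have "card {S\<in>A. ides S = k} = card {S\<in>B. ides S = k}" if "k \<le> n"
    by (rule triangular_inversion[where a = "\<lambda>j. card {S\<in>A. ides S = j}" and b = "\<lambda>j. card {S\<in>B. ides S = j}",
      OF sums upper diagonal that])
  moreover have "card {S\<in>A. ides S = k} = card {S\<in>B. ides S = k}" if "\<not> k \<le> n"
  proof -
    have "{S\<in>A. ides S = k} = {}" "{S\<in>B. ides S = k} = {}" using that ides_A ides_B by auto
    then show ?thesis by (simp only:)
  qed
  ultimately have "card {S\<in>A. ides S = k} = card {S\<in>B. ides S = k}" by blast
  moreover have "{S \<in> perms n. andreI S \<and> Des S = D \<and> ides S = k} = {S\<in>A. ides S = k}"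
    "{S \<in> perms n. andreII S \<and> Des S = D \<and> ides S = k} = {S\<in>B. ides S = k}"
    unfolding A_def B_def by auto
  ultimately show ?thesis by simp
qed

definition insert_at :: "nat \<Rightarrow> int \<Rightarrow> int list \<Rightarrow> int list" where
  "insert_at p x w = take p w @ x # drop p w"

lemma length_insert_at [simp]: "p \<le> length w \<Longrightarrow> length (insert_at p x w) = Suc (length w)"
  unfolding insert_at_def by simp

lemma insert_at_not_Nil [simp]: "insert_at p x w \<noteq> []"
  unfolding insert_at_def by simp

lemma set_insert_at [simp]: "set (insert_at p x w) = insert x (set w)"
  unfolding insert_at_def by (metis Un_insert_right append_take_drop_id list.simps(15) set_append)

lemma nth_insert_at:
  "p \<le> length w \<Longrightarrow> insert_at p x w ! i = (if i < p then w ! i else if i = p then x else w ! (i - 1))"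
  unfolding insert_at_def by (auto simp: nth_append min_def nth_Cons' not_less)

lemma insert_at_append_Cons:
  "p \<le> length l \<Longrightarrow> insert_at p x (l @ a # r) = insert_at p x l @ a # r"
  "insert_at (Suc (length l + q)) x (l @ a # r) = l @ a # insert_at q x r"
  unfolding insert_at_def by simp_all

lemma Des_insert_at_max:
  assumes p: "p \<le> length w" and x: "\<forall>y\<in>set w. y < x"
  shows "Des (insert_at p x w) =
    {i \<in> Des w. i < p} \<union> (if p < length w then {Suc p} else {}) \<union> Suc ` {i \<in> Des w. p < i}"
proof (rule set_eqI)
  fix j
  have w_less: "i < length w \<Longrightarrow> w ! i < x" "i < length w \<Longrightarrow> \<not> x < w ! i" for i
    using x by (auto simp: not_less less_imp_le)
  show "j \<in> Des (insert_at p x w) \<longleftrightarrow>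
    j \<in> {i \<in> Des w. i < p} \<union> (if p < length w then {Suc p} else {}) \<union> Suc ` {i \<in> Des w. p < i}"
  proof (cases j)
    case (Suc i)
    consider "Suc i < p" | "Suc i = p" | "i = p" | "p < i" by linarith
    then show ?thesis
      using p unfolding Suc by cases (auto simp: mem_Des_iff nth_insert_at inj_image_mem_iff w_less)
  qed (auto simp: zero_not_mem_Des)
qed

lemma Des_insert_at_end:
  "\<forall>y\<in>set w. y < x \<Longrightarrow> Des (insert_at (length w) x w) = Des w"
  using Des_insert_at_max[of "length w" w x] Des_subset[of w] by auto

lemma has_double_descent_insert_at_max:
  assumes p: "p \<le> length u" and x: "\<forall>y\<in>set u. y < x" and nd: "\<not> has_double_descent u"
  shows "has_double_descent (insert_at p x u) \<longleftrightarrow> Suc p \<in> Des u"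
proof
  assume "Suc p \<in> Des u"
  then have "Suc p < length u" "u ! Suc p < u ! p" "u ! p < x" using x by (auto simp: Suc_mem_Des)
  then have "p + 2 < length (insert_at p x u) \<and> insert_at p x u ! p > insert_at p x u ! (p + 1)
      \<and> insert_at p x u ! (p + 1) > insert_at p x u ! (p + 2)"
    using p by (simp add: nth_insert_at)
  then show "has_double_descent (insert_at p x u)" unfolding has_double_descent_def by blast
next
  assume "has_double_descent (insert_at p x u)"
  then obtain i where i: "i + 2 < Suc (length u)" "insert_at p x u ! i > insert_at p x u ! (i + 1)"
    "insert_at p x u ! (i + 1) > insert_at p x u ! (i + 2)"
    using p unfolding has_double_descent_def by auto
  have u_less: "k < length u \<Longrightarrow> u ! k < x" for k using x by simp
  have no_dd: "\<not> (k + 2 < length u \<and> u ! k > u ! (k + 1) \<and> u ! (k + 1) > u ! (k + 2))" for k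
    using nd unfolding has_double_descent_def by blast
  consider "i + 2 < p" | "i + 2 = p" | "i + 1 = p" | "i = p" | "p < i" by linarith
  then show "Suc p \<in> Des u"
  proof cases
    case 1
    then show ?thesis using i p no_dd[of i] by (simp add: nth_insert_at)
  next
    case 2
    then show ?thesis using i p u_less[of "i + 1"] by (simp add: nth_insert_at)
  next
    case 3
    then show ?thesis using i p u_less[of i] by (simp add: nth_insert_at)
  next
    case 4
    then show ?thesis using i p by (simp add: nth_insert_at Suc_mem_Des)
  next
    case 5
    then obtain k where "i = Suc k" by (cases i) auto
    then show ?thesis using i p 5 no_dd[of k] by (simp add: nth_insert_at)
  qed
qed

definition simsun :: "int list \<Rightarrow> bool" where
  "simsun u \<longleftrightarrow> (\<forall>k. \<not> has_double_descent (filter (\<lambda>x. x \<le> k) u))"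

lemma simsun_insert_at_max:
  assumes p: "p \<le> length u" and x: "\<forall>y\<in>set u. y < x"
  shows "simsun (insert_at p x u) \<longleftrightarrow> simsun u \<and> Suc p \<notin> Des u"
proof -
  let ?dd = "\<lambda>k w. has_double_descent (filter (\<lambda>y. y \<le> k) w)"
  have small: "filter (\<lambda>y. y \<le> k) (insert_at p x u) = filter (\<lambda>y. y \<le> k) u" if "k < x" for k
  proof -
    have "filter (\<lambda>y. y \<le> k) (insert_at p x u) = filter (\<lambda>y. y \<le> k) (take p u @ drop p u)"
      using that unfolding insert_at_def filter_append by simp
    then show ?thesis by simp
  qed
  have large: "filter (\<lambda>y. y \<le> k) (insert_at p x u) = insert_at p x u" if "x \<le> k" for k
    using that x by (auto simp: filter_id_conv)
  have u_all: "filter (\<lambda>y. y \<le> k) u = u" if "x - 1 \<le> k" for k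
    using that x by (auto simp: filter_id_conv)
  have simsun_u: "simsun u \<longleftrightarrow> (\<forall>k<x. \<not> ?dd k u)"
  proof
    assume below: "\<forall>k<x. \<not> ?dd k u"
    show "simsun u" unfolding simsun_def
    proof
      fix k
      show "\<not> ?dd k u"
      proof (cases "k < x")
        case False
        then show ?thesis using below[rule_format, of "x - 1"] u_all[of k] u_all[of "x - 1"] by simp
      qed (use below in simp)
    qed
  qed (simp add: simsun_def)
  have "simsun (insert_at p x u) \<longleftrightarrow> (\<forall>k<x. \<not> ?dd k u) \<and> \<not> has_double_descent (insert_at p x u)"
  proof
    assume "simsun (insert_at p x u)"
    then have all: "\<not> ?dd k (insert_at p x u)" for k by (simp add: simsun_def)
    have "\<not> ?dd k u" if "k < x" for k using all[of k] small[OF that] by simp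
    then show "(\<forall>k<x. \<not> ?dd k u) \<and> \<not> has_double_descent (insert_at p x u)"
      using all[of x] large[of x] by simp
  next
    assume *: "(\<forall>k<x. \<not> ?dd k u) \<and> \<not> has_double_descent (insert_at p x u)"
    have "\<not> ?dd k (insert_at p x u)" for k
      using * small[of k] large[of k] by (cases "k < x") simp_all
    then show "simsun (insert_at p x u)" by (simp add: simsun_def)
  qed
  moreover have "\<not> has_double_descent u" if "simsun u"
  proof -
    have "\<not> ?dd (x - 1) u" using that unfolding simsun_def by blast
    then show ?thesis using u_all[of "x - 1"] by simp
  qed
  ultimately show ?thesis using has_double_descent_insert_at_max[OF p x] simsun_u by blast
qed

lemma RS_eq:
  assumes "n \<ge> 1"
  shows "RS n = {w \<in> perms n. last w = int n \<and> simsun w}"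
proof -
  have "(\<forall>k\<in>{1..int n}. \<not> has_double_descent (filter (\<lambda>x. x \<le> k) w)) \<longleftrightarrow> simsun w"
    if w: "w \<in> perms n" for w
  proof
    assume between: "\<forall>k\<in>{1..int n}. \<not> has_double_descent (filter (\<lambda>x. x \<le> k) w)"
    show "simsun w" unfolding simsun_def
    proof
      fix k
      consider "k < 1" | "k \<in> {1..int n}" | "int n < k" by fastforce
      then show "\<not> has_double_descent (filter (\<lambda>x. x \<le> k) w)"
      proof cases
        case 1
        then have "filter (\<lambda>x. x \<le> k) w = []" using w unfolding perms_def by (auto simp: filter_empty_conv)
        then show ?thesis unfolding has_double_descent_def by simp
      next
        case 3
        then have "filter (\<lambda>x. x \<le> k) w = filter (\<lambda>x. x \<le> int n) w"
          using w unfolding perms_def by (auto intro: filter_cong)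
        then show ?thesis using between assms by simp
      qed (use between in blast)
    qed
  qed (simp add: simsun_def)
  moreover have "w \<noteq> []" if "w \<in> perms n" for w using that length_perms assms by fastforce
  ultimately show ?thesis unfolding RS_def by auto
qed

definition andreII_slot :: "int list \<Rightarrow> nat \<Rightarrow> bool" where
  "andreII_slot w p \<longleftrightarrow> p = length w \<or> Suc p < length w \<and> w ! p < w ! Suc p"

lemma andreII_slot_append_Cons:
  assumes l: "\<forall>y\<in>set l. a < y" and r: "\<forall>y\<in>set r. a < y"
  shows "p < length l \<Longrightarrow> andreII_slot (l @ a # r) p \<longleftrightarrow> andreII_slot l p"
    and "andreII_slot (l @ a # r) (length l) \<longleftrightarrow> r \<noteq> []"
    and "andreII_slot (l @ a # r) (Suc (length l + q)) \<longleftrightarrow> andreII_slot r q"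
proof -
  assume p: "p < length l"
  show "andreII_slot (l @ a # r) p \<longleftrightarrow> andreII_slot l p"
  proof (cases "Suc p < length l")
    case False
    then have "Suc p = length l" using p by simp
    then have "(l @ a # r) ! p = l ! p" "(l @ a # r) ! Suc p = a" "a < l ! p"
      using p l by (auto simp: nth_append)
    then show ?thesis using False p unfolding andreII_slot_def by auto
  qed (use p in \<open>auto simp: andreII_slot_def nth_append\<close>)
next
  show "andreII_slot (l @ a # r) (length l) \<longleftrightarrow> r \<noteq> []"
    using r by (cases r) (auto simp: andreII_slot_def nth_append)
next
  show "andreII_slot (l @ a # r) (Suc (length l + q)) \<longleftrightarrow> andreII_slot r q"
    by (auto simp: andreII_slot_def nth_append)
qed

lemma Min_insert_greater:
  assumes "finite A" "A \<noteq> {}" "\<forall>y\<in>A. y < (x::int)"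
  shows "Min (insert x A) = Min A"
proof -
  have "Min A < x" using assms Min_in[OF assms(1,2)] by blast
  then show ?thesis using Min_insert[OF assms(1,2), of x] by simp
qed

lemma andreII_insert_max:
  assumes "distinct w" "\<forall>y\<in>set w. y < x" "w \<noteq> []" "p \<le> length w"
  shows "andreII (insert_at p x w) \<longleftrightarrow> andreII w \<and> andreII_slot w p"
  using assms
proof (induction w arbitrary: p rule: min_split_induct)
  case (short w)
  then obtain y where w: "w = [y]" "y < x" by (cases w) auto
  have "andreII ([] @ y # [x])" "\<not> andreII ([x] @ y # [])"
    using andreII_split[of "[]" y "[x]"] andreII_split[of "[x]" y "[]"] w(2) by (simp_all add: andreII_short)
  moreover have "[] @ y # [x] = insert_at 1 x [y]" "[x] @ y # [] = insert_at 0 x [y]"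
    by (simp_all add: insert_at_def)
  ultimately show ?case
    using short.prems w by (cases p) (auto simp: andreII_slot_def andreII_short)
next
  case (split l a r)
  have r_gt: "\<forall>y\<in>set r. a < y" using split.hyps(2) split.prems(1) by force
  have a_x: "a < x" and l_x: "\<forall>y\<in>set l. y < x" and r_x: "\<forall>y\<in>set r. y < x"
    using split.prems(2) by auto
  have lr_x: "\<forall>y\<in>set (l @ r). y < x" using l_x r_x by auto
  have dist: "distinct l" "distinct r" using split.prems(1) by auto
  note slot = andreII_slot_append_Cons[OF split.hyps(1) r_gt]
  note w_iff = andreII_split[OF split.hyps]
  show ?case
  proof (cases "p \<le> length l")
    case True
    have split': "\<forall>y\<in>set (insert_at p x l). a < y" using split.hyps(1) a_x by simp
    have ins_iff: "andreII (insert_at p x (l @ a # r)) \<longleftrightarrow>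
        andreII (insert_at p x l) \<and> andreII r \<and> Min (set (insert_at p x l @ r)) \<in> set r"
      unfolding insert_at_append_Cons(1)[OF True] using andreII_split[OF split' split.hyps(2)] by simp
    show ?thesis
    proof (cases "l = []")
      case True
      then have "p = length l" "r \<noteq> []" using \<open>p \<le> length l\<close> split.hyps(3) by auto
      moreover have "Min (set (insert_at p x l @ r)) = Min (set r)"
        using True \<open>r \<noteq> []\<close> r_x Min_insert_greater[of "set r" x] by (simp add: insert_at_def)
      ultimately show ?thesis
        using ins_iff w_iff slot(2) True by (simp add: insert_at_def andreII_short)
    next
      case False
      have "Min (set (insert_at p x l @ r)) = Min (set (l @ r))"
        using False Min_insert_greater[OF finite_set _ lr_x] by simp
      moreover have "andreII_slot (l @ a # r) p \<longleftrightarrow> andreII_slot l p" if "Min (set (l @ r)) \<in> set r"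
      proof -
        have "r \<noteq> []" using that by auto
        then show ?thesis
          using slot(1) slot(2) \<open>p \<le> length l\<close> by (cases "p = length l") (auto simp: andreII_slot_def)
      qed
      ultimately show ?thesis
        using ins_iff w_iff split.IH(1)[OF dist(1) l_x False True] by auto
    qed
  next
    case False
    define q where "q = p - Suc (length l)"
    have p: "p = Suc (length l + q)" and q: "q \<le> length r"
      using False split.prems(4) unfolding q_def by auto
    have split': "\<forall>y\<in>set (insert_at q x r). a \<le> y" using split.hyps(2) a_x by auto
    have ins_iff: "andreII (insert_at p x (l @ a # r)) \<longleftrightarrow>
        andreII l \<and> andreII (insert_at q x r) \<and> Min (set (l @ insert_at q x r)) \<in> set (insert_at q x r)"
      unfolding p insert_at_append_Cons(2) using andreII_split[OF split.hyps(1) split'] by simp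
    have Min_ne_x: "Min (set (l @ insert_at q x r)) \<noteq> x" if "l @ r \<noteq> []"
      using that lr_x Min_insert_greater[OF finite_set _ lr_x] Min_in[of "set (l @ r)"] by auto
    show ?thesis
    proof (cases "r = []")
      case True
      then show ?thesis using ins_iff w_iff Min_ne_x split.hyps(3) q by (simp add: insert_at_def)
    next
      case False
      have "Min (set (l @ insert_at q x r)) = Min (set (l @ r))"
        using False Min_insert_greater[OF finite_set _ lr_x] by simp
      then show ?thesis
        using ins_iff w_iff Min_ne_x False split.IH(2)[OF dist(2) r_x False q] slot(3) unfolding p by auto
    qed
  qed
qed

lemma insert_at_perms:
  assumes w: "w \<in> perms N" and p: "p \<le> N"
  shows "insert_at p (int (Suc N)) w \<in> perms (Suc N)"
proof -
  have x: "int (Suc N) \<notin> set w" using w unfolding perms_def by auto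
  have "distinct w" using w unfolding perms_def by simp
  then have "distinct (insert_at p (int (Suc N)) w)"
    using x set_take_disj_set_drop_if_distinct[of w p p] unfolding insert_at_def
    by (auto dest: in_set_takeD in_set_dropD)
  moreover have "insert (int (Suc N)) {1..int N} = {1..int (Suc N)}" by auto
  ultimately show ?thesis using w unfolding perms_def by simp
qed

lemma removeAll_insert_at: "x \<notin> set w \<Longrightarrow> removeAll x (insert_at p x w) = w"
  unfolding insert_at_def by (metis append_take_drop_id removeAll.simps(2) removeAll_append removeAll_id
      set_drop_subset set_take_subset subsetD)

lemma pos_insert_at:
  assumes w: "w \<in> perms N" and p: "p \<le> N"
  shows "pos (insert_at p (int (Suc N)) w) N = p"
    and "v < N \<Longrightarrow> pos (insert_at p (int (Suc N)) w) v = (if pos w v < p then pos w v else Suc (pos w v))"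
proof -
  note ins = insert_at_perms[OF w p]
  have len: "length w = N" using length_perms[OF w] .
  show "pos (insert_at p (int (Suc N)) w) N = p"
    using pos_eqI[OF ins, of p N] p len by (simp add: nth_insert_at)
  assume "v < N"
  then show "pos (insert_at p (int (Suc N)) w) v = (if pos w v < p then pos w v else Suc (pos w v))"
    using pos_eqI[OF ins, of "if pos w v < p then pos w v else Suc (pos w v)" v] pos_perms[OF w] p len
    by (auto simp: nth_insert_at)
qed

lemma perms_Suc_decompose:
  assumes "\<sigma> \<in> perms (Suc N)"
  shows "removeAll (int (Suc N)) \<sigma> \<in> perms N" "pos \<sigma> N \<le> N"
    "\<sigma> = insert_at (pos \<sigma> N) (int (Suc N)) (removeAll (int (Suc N)) \<sigma>)"
proof -
  define p where "p = pos \<sigma> N"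
  have len: "length \<sigma> = Suc N" and dist: "distinct \<sigma>" using assms length_perms unfolding perms_def by auto
  have p: "p < Suc N" "\<sigma> ! p = int (Suc N)" using pos_perms[OF assms, of N] unfolding p_def by auto
  then have split: "\<sigma> = take p \<sigma> @ int (Suc N) # drop (Suc p) \<sigma>"
    using len by (metis id_take_nth_drop)
  have "distinct (take p \<sigma> @ int (Suc N) # drop (Suc p) \<sigma>)" by (subst split[symmetric]) (rule dist)
  then have "int (Suc N) \<notin> set (take p \<sigma>) \<union> set (drop (Suc p) \<sigma>)" by auto
  then have rm: "removeAll (int (Suc N)) \<sigma> = take p \<sigma> @ drop (Suc p) \<sigma>"
    by (subst split) simp
  show "pos \<sigma> N \<le> N" using p unfolding p_def by simp
  show "\<sigma> = insert_at (pos \<sigma> N) (int (Suc N)) (removeAll (int (Suc N)) \<sigma>)"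
    unfolding p_def[symmetric] rm insert_at_def using p len by (subst split) simp
  have "set (removeAll (int (Suc N)) \<sigma>) = {1..int (Suc N)} - {int (Suc N)}"
    using assms unfolding perms_def by simp
  also have "\<dots> = {1..int N}" by auto
  finally show "removeAll (int (Suc N)) \<sigma> \<in> perms N"
    using dist unfolding perms_def by (simp add: distinct_removeAll)
qed

lemma bij_betw_insert_at_perms:
  "bij_betw (\<lambda>(w, p). insert_at p (int (Suc N)) w) {(w, p). w \<in> perms N \<and> p \<le> N} (perms (Suc N))"
proof (rule bij_betw_byWitness[where f' = "\<lambda>\<sigma>. (removeAll (int (Suc N)) \<sigma>, pos \<sigma> N)"])
  have "int (Suc N) \<notin> set w" if "w \<in> perms N" for w using that unfolding perms_def by auto
  then show "\<forall>a\<in>{(w, p). w \<in> perms N \<and> p \<le> N}.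
      (removeAll (int (Suc N)) ((\<lambda>(w, p). insert_at p (int (Suc N)) w) a),
       pos ((\<lambda>(w, p). insert_at p (int (Suc N)) w) a) N) = a"
    using removeAll_insert_at pos_insert_at(1) by auto
qed (use perms_Suc_decompose insert_at_perms in auto)

lemma ides_insert_at_max:
  assumes w: "w \<in> perms N" and N: "N \<ge> 1" and p: "p \<le> N"
  shows "ides (insert_at p (int (Suc N)) w) = ides w + (if p \<le> pos w (N - 1) then 1 else 0)"
proof -
  let ?\<sigma> = "insert_at p (int (Suc N)) w"
  have len: "length w = N" using length_perms[OF w] .
  note ins = insert_at_perms[OF w p]
  have len_\<sigma>: "length ?\<sigma> = Suc N" using p len by simp
  have shift_less: "pos ?\<sigma> u < pos ?\<sigma> v \<longleftrightarrow> pos w u < pos w v" if "u < N" "v < N" for u v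
    using pos_insert_at(2)[OF w p that(1)] pos_insert_at(2)[OF w p that(2)] by auto
  have "ides_set ?\<sigma> = ides_set w \<union> (if p \<le> pos w (N - 1) then {N - 1} else {})"
  proof (rule set_eqI)
    fix v
    show "v \<in> ides_set ?\<sigma> \<longleftrightarrow> v \<in> ides_set w \<union> (if p \<le> pos w (N - 1) then {N - 1} else {})"
    proof (cases "Suc v < N")
      case True
      then show ?thesis using shift_less[of "Suc v" v] len p unfolding ides_set_def by auto
    next
      case False
      then consider "Suc v = N" | "N < Suc v" by linarith
      then show ?thesis
      proof cases
        case 1
        have "pos ?\<sigma> (Suc v) = p" using pos_insert_at(1)[OF w p] 1 by simp
        moreover have "pos ?\<sigma> v = (if pos w v < p then pos w v else Suc (pos w v))"
          using pos_insert_at(2)[OF w p, of v] 1 by simp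
        moreover have "v = N - 1" using 1 by simp
        ultimately show ?thesis using 1 len len_\<sigma> unfolding ides_set_def by auto
      qed (use len len_\<sigma> N in \<open>auto simp: ides_set_def\<close>)
    qed
  qed
  moreover have "N - 1 \<notin> ides_set w" unfolding ides_set_def len by auto
  moreover have "finite (ides_set w)"
  proof (rule finite_subset)
    show "ides_set w \<subseteq> {..<N}" using ides_set_subset[OF w] by auto
  qed simp
  ultimately show ?thesis using ides_eq_card[OF w] ides_eq_card[OF ins] by auto
qed

text \<open>The position of the largest letter, unless it is the last one: together with \<open>ides\<close> it
  determines how \<open>ides\<close> changes when a new maximum is inserted.\<close>

definition inner_max_pos :: "int list \<Rightarrow> nat option" where
  "inner_max_pos w = (if Suc (pos w (length w - 1)) = length w then None else Some (pos w (length w - 1)))"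

lemma inner_max_pos_insert_at:
  "w \<in> perms N \<Longrightarrow> p \<le> N \<Longrightarrow> inner_max_pos (insert_at p (int (Suc N)) w) = (if p = N then None else Some p)"
  unfolding inner_max_pos_def using pos_insert_at(1) length_perms by simp

lemma bij_betw_insert_at_family:
  assumes Y: "\<And>w p. w \<in> perms N \<Longrightarrow> p \<le> N \<Longrightarrow> insert_at p (int (Suc N)) w \<in> Y \<longleftrightarrow> w \<in> X \<and> slot w p"
    and subsets: "X \<subseteq> perms N" "Y \<subseteq> perms (Suc N)" and slot: "\<And>w p. w \<in> X \<Longrightarrow> slot w p \<Longrightarrow> p \<le> N"
  shows "bij_betw (\<lambda>(w, p). insert_at p (int (Suc N)) w) {(w, p). w \<in> X \<and> slot w p} Y"
proof (rule bij_betw_subset[OF bij_betw_insert_at_perms])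
  show "{(w, p). w \<in> X \<and> slot w p} \<subseteq> {(w, p). w \<in> perms N \<and> p \<le> N}" using subsets slot by auto
  show "(\<lambda>(w, p). insert_at p (int (Suc N)) w) ` {(w, p). w \<in> X \<and> slot w p} = Y"
  proof
    show "(\<lambda>(w, p). insert_at p (int (Suc N)) w) ` {(w, p). w \<in> X \<and> slot w p} \<subseteq> Y"
      using Y subsets slot by auto
    show "Y \<subseteq> (\<lambda>(w, p). insert_at p (int (Suc N)) w) ` {(w, p). w \<in> X \<and> slot w p}"
    proof
      fix \<sigma> assume "\<sigma> \<in> Y"
      then obtain w p where "w \<in> perms N" "p \<le> N" "\<sigma> = insert_at p (int (Suc N)) w"
        using subsets(2) perms_Suc_decompose by blast
      with \<open>\<sigma> \<in> Y\<close> Y show "\<sigma> \<in> (\<lambda>(w, p). insert_at p (int (Suc N)) w) ` {(w, p). w \<in> X \<and> slot w p}"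
        by auto
    qed
  qed
qed

lemma bij_betw_insert_at_AndII:
  assumes "N \<ge> 1"
  shows "bij_betw (\<lambda>(w, p). insert_at p (int (Suc N)) w) {(w, p). w \<in> AndII N \<and> andreII_slot w p} (AndII (Suc N))"
proof (rule bij_betw_insert_at_family)
  fix w p assume w: "w \<in> perms N" and p: "p \<le> N"
  have "distinct w" "\<forall>y\<in>set w. y < int (Suc N)" "w \<noteq> []" "p \<le> length w"
    using w p assms length_perms[OF w] unfolding perms_def by auto
  then show "insert_at p (int (Suc N)) w \<in> AndII (Suc N) \<longleftrightarrow> w \<in> AndII N \<and> andreII_slot w p"
    using andreII_insert_max insert_at_perms[OF w p] w unfolding AndII_def by auto
qed (auto simp: AndII_def andreII_slot_def dest: length_perms)

definition simsun_perms :: "nat \<Rightarrow> int list set" where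
  "simsun_perms N = {u \<in> perms N. simsun u}"

lemma bij_betw_insert_at_simsun:
  "bij_betw (\<lambda>(u, q). insert_at q (int (Suc N)) u)
     {(u, q). u \<in> simsun_perms N \<and> q \<le> N \<and> Suc q \<notin> Des u} (simsun_perms (Suc N))"
proof (rule bij_betw_insert_at_family)
  fix u q assume u: "u \<in> perms N" and q: "q \<le> N"
  have "q \<le> length u" "\<forall>y\<in>set u. y < int (Suc N)" using u q length_perms[OF u] unfolding perms_def by auto
  then show "insert_at q (int (Suc N)) u \<in> simsun_perms (Suc N) \<longleftrightarrow> u \<in> simsun_perms N \<and> q \<le> N \<and> Suc q \<notin> Des u"
    using simsun_insert_at_max insert_at_perms[OF u q] u q unfolding simsun_perms_def by auto
qed (auto simp: simsun_perms_def)

definition stats :: "int list \<Rightarrow> nat set \<times> nat \<times> nat option" where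
  "stats w = (Des w, ides w, inner_max_pos w)"

lemma stats_insert_at_max_cong:
  assumes w: "w \<in> perms (Suc N)" and u: "u \<in> perms N" and N: "N \<ge> 1"
    and same: "stats u = stats w" and p: "p = Suc N \<or> p < N"
  shows "stats (insert_at (if p = Suc N then N else p) (int (Suc N)) u) = stats (insert_at p (int (Suc (Suc N))) w)"
proof -
  define q where "q = (if p = Suc N then N else p)"
  have q: "q \<le> N" "p \<le> Suc N" using p unfolding q_def by auto
  have len: "length w = Suc N" "length u = N" using w u length_perms by auto
  have letters: "\<forall>y\<in>set w. y < int (Suc (Suc N))" "\<forall>y\<in>set u. y < int (Suc N)"
    using w u unfolding perms_def by auto
  have Des: "Des u = Des w" and ides: "ides u = ides w" and max_pos: "inner_max_pos u = inner_max_pos w"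
    using same unfolding stats_def by auto
  have "Des (insert_at q (int (Suc N)) u) = Des (insert_at p (int (Suc (Suc N))) w)"
    using Des_insert_at_max[of q u] Des_insert_at_max[of p w] letters q len p Des Des_subset[of u]
    unfolding q_def by (auto split: if_splits)
  moreover have "(q \<le> pos u (N - 1)) = (p \<le> pos w (Suc N - 1))"
  proof -
    have "pos u (N - 1) < N" "pos w N < Suc N" using pos_perms(1)[OF u] pos_perms(1)[OF w] N by auto
    moreover have "pos u (N - 1) = pos w N \<or> (pos u (N - 1) = N - 1 \<and> pos w N = N)"
      using max_pos len N unfolding inner_max_pos_def by (auto split: if_splits)
    ultimately show ?thesis using p unfolding q_def by auto
  qed
  then have "ides (insert_at q (int (Suc N)) u) = ides (insert_at p (int (Suc (Suc N))) w)"
    using ides_insert_at_max[OF u N q(1)] ides_insert_at_max[OF w _ q(2)] ides by simp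
  moreover have "inner_max_pos (insert_at q (int (Suc N)) u) = inner_max_pos (insert_at p (int (Suc (Suc N))) w)"
    using inner_max_pos_insert_at[OF u q(1)] inner_max_pos_insert_at[OF w q(2)] p unfolding q_def by auto
  ultimately show ?thesis unfolding stats_def q_def by simp
qed

lemma andreII_slot_perms:
  assumes "w \<in> perms (Suc N)"
  shows "andreII_slot w p \<longleftrightarrow> p = Suc N \<or> p < N \<and> Suc p \<notin> Des w"
proof -
  have "length w = Suc N" "distinct w" using assms length_perms unfolding perms_def by auto
  then show ?thesis
    unfolding andreII_slot_def Suc_mem_Des using nth_eq_iff_index_eq[of w p "Suc p"]
    by (auto simp: not_less order.order_iff_strict)
qed

lemma simsun_slot_perms:
  assumes "u \<in> perms N"
  shows "q \<le> N \<and> Suc q \<notin> Des u \<longleftrightarrow> q = N \<or> q < N \<and> Suc q \<notin> Des u"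
  using Des_subset[of u] length_perms[OF assms] by auto

lemma bij_betw_slots:
  assumes f: "bij_betw f (AndII (Suc N)) (simsun_perms N)"
    and Des_f: "\<And>w. w \<in> AndII (Suc N) \<Longrightarrow> Des (f w) = Des w"
  shows "bij_betw (\<lambda>(w, p). (f w, if p = Suc N then N else p))
     {(w, p). w \<in> AndII (Suc N) \<and> andreII_slot w p} {(u, q). u \<in> simsun_perms N \<and> q \<le> N \<and> Suc q \<notin> Des u}"
proof (rule bij_betw_byWitness[where f' = "\<lambda>(u, q). (inv_into (AndII (Suc N)) f u, if q = N then Suc N else q)"])
  have slot: "andreII_slot w p \<longleftrightarrow> p = Suc N \<or> p < N \<and> Suc p \<notin> Des w" if "w \<in> AndII (Suc N)" for w p
    using that andreII_slot_perms unfolding AndII_def by auto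
  have slot': "q \<le> N \<and> Suc q \<notin> Des u \<longleftrightarrow> q = N \<or> q < N \<and> Suc q \<notin> Des u" if "u \<in> simsun_perms N" for u q
    using that simsun_slot_perms unfolding simsun_perms_def by auto
  have last_not_Des: "Suc N \<notin> Des w" if "w \<in> AndII (Suc N)" for w
    using that Des_subset[of w] length_perms unfolding AndII_def by fastforce
  have f_in: "f w \<in> simsun_perms N" if "w \<in> AndII (Suc N)" for w
    using f that bij_betwE by blast
  have inv_in: "inv_into (AndII (Suc N)) f u \<in> AndII (Suc N)" "f (inv_into (AndII (Suc N)) f u) = u"
    if "u \<in> simsun_perms N" for u
    using f that by (auto simp: bij_betw_def inv_into_into f_inv_into_f)
  show "\<forall>a\<in>{(w, p). w \<in> AndII (Suc N) \<and> andreII_slot w p}.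
      (\<lambda>(u, q). (inv_into (AndII (Suc N)) f u, if q = N then Suc N else q)) ((\<lambda>(w, p). (f w, if p = Suc N then N else p)) a) = a"
    using f slot by (auto simp: bij_betw_def)
  show "\<forall>a\<in>{(u, q). u \<in> simsun_perms N \<and> q \<le> N \<and> Suc q \<notin> Des u}.
      (\<lambda>(w, p). (f w, if p = Suc N then N else p)) ((\<lambda>(u, q). (inv_into (AndII (Suc N)) f u, if q = N then Suc N else q)) a) = a"
    using inv_in by auto
  show "(\<lambda>(w, p). (f w, if p = Suc N then N else p)) ` {(w, p). w \<in> AndII (Suc N) \<and> andreII_slot w p}
      \<subseteq> {(u, q). u \<in> simsun_perms N \<and> q \<le> N \<and> Suc q \<notin> Des u}"
    using f_in slot slot' Des_f last_not_Des by auto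
  show "(\<lambda>(u, q). (inv_into (AndII (Suc N)) f u, if q = N then Suc N else q)) ` {(u, q). u \<in> simsun_perms N \<and> q \<le> N \<and> Suc q \<notin> Des u}
      \<subseteq> {(w, p). w \<in> AndII (Suc N) \<and> andreII_slot w p}"
    using inv_in slot slot' Des_f by (auto simp del: inv_into_def) fastforce+
qed

lemma perms_one: "perms 1 = {[1]}"
proof -
  have "w = [1]" if "w \<in> perms 1" for w
    using that length_perms[OF that] unfolding perms_def by (cases w) auto
  then show ?thesis unfolding perms_def by auto
qed

lemma AndII_one: "AndII 1 = {[1]}"
  unfolding AndII_def perms_one by (auto simp: andreII_short)

lemma simsun_one: "simsun [1]"
  unfolding simsun_def
proof
  fix k :: int
  have "length (filter (\<lambda>x. x \<le> k) [1]) \<le> 1" by simp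
  then show "\<not> has_double_descent (filter (\<lambda>x. x \<le> k) [1])"
    unfolding has_double_descent_def by linarith
qed

lemma AndII_simsun_bij:
  assumes "N \<ge> 1"
  shows "\<exists>f. bij_betw f (AndII (Suc N)) (simsun_perms N) \<and> (\<forall>w\<in>AndII (Suc N). stats (f w) = stats w)"
  using assms
proof (induction N rule: nat_induct_at_least)
  case base
  have "andreII_slot [1] p \<longleftrightarrow> p = 1" for p unfolding andreII_slot_def by auto
  then have "{(w, p). w \<in> AndII 1 \<and> andreII_slot w p} = {([1], 1)}" using AndII_one by auto
  then have AndII_2: "AndII (Suc 1) = {insert_at 1 (int (Suc 1)) [1]}"
    using bij_betw_imp_surj_on[OF bij_betw_insert_at_AndII[of 1]] by simp
  have simsun_1: "simsun_perms 1 = {[1]}" using perms_one simsun_one unfolding simsun_perms_def by auto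
  have "pos [1] 0 = 0" using pos_eqI[of "[1]" 1 0 0] perms_one by simp
  then have "Des (insert_at 1 (int (Suc 1)) [1]) = Des [1]"
    "ides (insert_at 1 (int (Suc 1)) [1]) = ides [1]"
    "inner_max_pos (insert_at 1 (int (Suc 1)) [1]) = inner_max_pos [1]"
    using Des_insert_at_end[of "[1]"] ides_insert_at_max[of "[1]" 1 1] inner_max_pos_insert_at[of "[1]" 1 1]
      perms_one unfolding inner_max_pos_def by simp_all
  then show ?case using AndII_2 simsun_1 unfolding stats_def
    by (intro exI[of _ "\<lambda>_. [1]"]) (simp add: bij_betw_def)
next
  case (Suc N)
  obtain f where f: "bij_betw f (AndII (Suc N)) (simsun_perms N)"
    and f_stats: "\<And>w. w \<in> AndII (Suc N) \<Longrightarrow> stats (f w) = stats w"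
    using Suc.IH by blast
  let ?A = "{(w, p). w \<in> AndII (Suc N) \<and> andreII_slot w p}"
  let ?insA = "\<lambda>(w, p). insert_at p (int (Suc (Suc N))) w"
  let ?mid = "\<lambda>(w, p). (f w, if p = Suc N then N else p)"
  let ?insS = "\<lambda>(u, q). insert_at q (int (Suc N)) u"
  have insA: "bij_betw ?insA ?A (AndII (Suc (Suc N)))" using bij_betw_insert_at_AndII[of "Suc N"] by simp
  have mid: "bij_betw ?mid ?A {(u, q). u \<in> simsun_perms N \<and> q \<le> N \<and> Suc q \<notin> Des u}"
    using bij_betw_slots[OF f] f_stats unfolding stats_def by simp
  define g where "g = ?insS \<circ> ?mid \<circ> inv_into ?A ?insA"
  have "bij_betw g (AndII (Suc (Suc N))) (simsun_perms (Suc N))"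
    unfolding g_def using bij_betw_trans[OF bij_betw_inv_into[OF insA] bij_betw_trans[OF mid bij_betw_insert_at_simsun]] .
  moreover have "stats (g \<sigma>) = stats \<sigma>" if "\<sigma> \<in> AndII (Suc (Suc N))" for \<sigma>
  proof -
    have "\<sigma> \<in> ?insA ` ?A" using that bij_betw_imp_surj_on[OF insA] by simp
    then obtain w p where wp: "(w, p) \<in> ?A" "\<sigma> = insert_at p (int (Suc (Suc N))) w" by auto
    then have "inv_into ?A ?insA \<sigma> = (w, p)"
      using inv_into_f_f[OF bij_betw_imp_inj_on[OF insA] wp(1)] by simp
    then have "g \<sigma> = insert_at (if p = Suc N then N else p) (int (Suc N)) (f w)" unfolding g_def by simp
    moreover have "w \<in> perms (Suc N)" "f w \<in> perms N" "p = Suc N \<or> p < N"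
      using wp(1) f andreII_slot_perms unfolding AndII_def simsun_perms_def by (auto dest: bij_betwE)
    ultimately show ?thesis using stats_insert_at_max_cong Suc.hyps f_stats wp by auto
  qed
  ultimately show ?case by blast
qed

lemma insert_at_end: "insert_at (length u) x u = u @ [x]"
  unfolding insert_at_def by simp

lemma bij_betw_simsun_RS:
  assumes N: "N \<ge> 1"
  shows "bij_betw (\<lambda>u. u @ [int (Suc N)]) (simsun_perms N) (RS (Suc N))"
proof (rule bij_betw_byWitness[where f' = butlast])
  have RS: "RS (Suc N) = {\<sigma> \<in> perms (Suc N). last \<sigma> = int (Suc N) \<and> simsun \<sigma>}"
    using RS_eq[of "Suc N"] by simp
  have letters: "\<forall>y\<in>set u. y < int (Suc N)" and len: "length u = N" if "u \<in> perms N" for u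
    using that length_perms unfolding perms_def by auto
  have simsun_append: "simsun (u @ [int (Suc N)]) \<longleftrightarrow> simsun u" if "u \<in> perms N" for u
    using simsun_insert_at_max[of "length u" u] letters[OF that] Des_subset[of u]
    unfolding insert_at_end by auto
  show "(\<lambda>u. u @ [int (Suc N)]) ` simsun_perms N \<subseteq> RS (Suc N)"
  proof
    fix \<sigma> assume "\<sigma> \<in> (\<lambda>u. u @ [int (Suc N)]) ` simsun_perms N"
    then obtain u where u: "u \<in> perms N" "simsun u" "\<sigma> = u @ [int (Suc N)]"
      unfolding simsun_perms_def by auto
    have "insert_at N (int (Suc N)) u = u @ [int (Suc N)]" using insert_at_end[of u] len[OF u(1)] by simp
    then have "u @ [int (Suc N)] \<in> perms (Suc N)" using insert_at_perms[OF u(1), of N] by simp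
    then show "\<sigma> \<in> RS (Suc N)" using simsun_append u unfolding RS by simp
  qed
  show "butlast ` RS (Suc N) \<subseteq> simsun_perms N"
  proof
    fix w assume "w \<in> butlast ` RS (Suc N)"
    then obtain \<sigma> where \<sigma>: "\<sigma> \<in> perms (Suc N)" "last \<sigma> = int (Suc N)" "simsun \<sigma>" "w = butlast \<sigma>"
      unfolding RS by auto
    define v where "v = removeAll (int (Suc N)) \<sigma>"
    have v: "v \<in> perms N" "\<sigma> = insert_at (pos \<sigma> N) (int (Suc N)) v"
      using perms_Suc_decompose[OF \<sigma>(1)] unfolding v_def by auto
    have "\<sigma> ! N = int (Suc N)"
      using \<sigma>(2) length_perms[OF \<sigma>(1)] last_conv_nth[of \<sigma>] by fastforce
    then have "pos \<sigma> N = N" using pos_eqI[OF \<sigma>(1), of N N] by simp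
    then have "\<sigma> = v @ [int (Suc N)]" using v len by (simp add: insert_at_end[symmetric])
    then show "w \<in> simsun_perms N" using \<sigma>(3,4) v(1) simsun_append unfolding simsun_perms_def by simp
  qed
  show "\<forall>u\<in>simsun_perms N. butlast (u @ [int (Suc N)]) = u" by simp
  have "\<sigma> \<noteq> []" if "\<sigma> \<in> perms (Suc N)" for \<sigma> using length_perms[OF that] by auto
  then show "\<forall>\<sigma>\<in>RS (Suc N). butlast \<sigma> @ [int (Suc N)] = \<sigma>"
    unfolding RS by (metis (mono_tags, lifting) append_butlast_last_id mem_Collect_eq)
qed


lemma AndII_RS_bij:
  assumes n: "n \<ge> 1"
  obtains h where "bij_betw h (AndII n) (RS n)" "\<And>w. w \<in> AndII n \<Longrightarrow> Des (h w) = Des w \<and> ides (h w) = ides w"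
proof (cases "n = 1")
  case True
  have "RS 1 = {[1]}" unfolding RS_eq[OF order_refl] perms_one using simsun_one by auto
  then show ?thesis using True AndII_one by (intro that[of id]) simp_all
next
  case False
  then obtain N where N: "n = Suc N" "N \<ge> 1" using n by (cases n) auto
  obtain f where f: "bij_betw f (AndII (Suc N)) (simsun_perms N)"
    and f_stats: "\<And>w. w \<in> AndII (Suc N) \<Longrightarrow> stats (f w) = stats w"
    using AndII_simsun_bij[OF N(2)] by blast
  show ?thesis
  proof (rule that[of "\<lambda>w. f w @ [int n]"])
    show "bij_betw (\<lambda>w. f w @ [int n]) (AndII n) (RS n)"
      using bij_betw_trans[OF f bij_betw_simsun_RS[OF N(2)]] unfolding N(1) comp_def .
    fix w assume w: "w \<in> AndII n"
    then have "f w \<in> simsun_perms N" using f N(1) bij_betwE by blast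
    then have u: "f w \<in> perms N" unfolding simsun_perms_def by simp
    have ins: "insert_at N (int n) (f w) = f w @ [int n]"
      using insert_at_end[of "f w"] length_perms[OF u] by simp
    have "\<forall>y\<in>set (f w). y < int n" using u N(1) unfolding perms_def by auto
    then have "Des (f w @ [int n]) = Des (f w)"
      using Des_insert_at_end[of "f w" "int n"] length_perms[OF u] ins by simp
    moreover have "ides (f w @ [int n]) = ides (f w)"
      using ides_insert_at_max[OF u N(2), of N] pos_perms(1)[OF u, of "N - 1"] N ins by simp
    ultimately show "Des (f w @ [int n]) = Des w \<and> ides (f w @ [int n]) = ides w"
      using f_stats[of w] w N(1) unfolding stats_def by simp
  qed
qed

lemma sum_eq_by_fibres:
  fixes W :: "'b \<Rightarrow> 'c::comm_semiring_1"
  assumes "finite A" "finite B" "\<And>y. card {x\<in>A. h x = y} = card {x\<in>B. h x = y}"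
  shows "(\<Sum>x\<in>A. W (h x)) = (\<Sum>x\<in>B. W (h x))"
  using sum_by_value[OF assms(1), of "h ` A \<union> h ` B" h W] sum_by_value[OF assms(2), of "h ` A \<union> h ` B" h W]
    assms by simp

theorem theorem1p1:
  fixes n :: nat and s t q :: "'a :: comm_semiring_1"
  assumes "n \<ge> 1"
  shows "(\<Sum>\<sigma>\<in>AndI n. s ^ ides \<sigma> * t ^ des \<sigma> * q ^ maj \<sigma>)
           = (\<Sum>\<sigma>\<in>AndII n. s ^ ides \<sigma> * t ^ des \<sigma> * q ^ maj \<sigma>)
       \<and> (\<Sum>\<sigma>\<in>AndII n. s ^ ides \<sigma> * t ^ des \<sigma> * q ^ maj \<sigma>)
           = (\<Sum>\<sigma>\<in>RS n. s ^ ides \<sigma> * t ^ des \<sigma> * q ^ maj \<sigma>)"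
proof
  define W where "W y = s ^ snd y * t ^ card (fst y) * q ^ (\<Sum>i\<in>fst y. i)" for y :: "nat set \<times> nat"
  have summand: "s ^ ides \<sigma> * t ^ des \<sigma> * q ^ maj \<sigma> = W (Des \<sigma>, ides \<sigma>)" for \<sigma>
    unfolding W_def des_def maj_def by simp
  have "card {\<sigma>\<in>AndI n. (Des \<sigma>, ides \<sigma>) = y} = card {\<sigma>\<in>AndII n. (Des \<sigma>, ides \<sigma>) = y}" for y
    using card_andreI_eq_card_andreII[OF assms, of "fst y" "snd y"]
    unfolding AndI_def AndII_def by (simp add: prod_eq_iff conj_assoc)
  then show "(\<Sum>\<sigma>\<in>AndI n. s ^ ides \<sigma> * t ^ des \<sigma> * q ^ maj \<sigma>) = (\<Sum>\<sigma>\<in>AndII n. s ^ ides \<sigma> * t ^ des \<sigma> * q ^ maj \<sigma>)"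
    unfolding summand using finite_perms
    by (intro sum_eq_by_fibres[where h = "\<lambda>\<sigma>. (Des \<sigma>, ides \<sigma>)"]) (auto simp: AndI_def AndII_def)
  obtain h where h: "bij_betw h (AndII n) (RS n)" "\<And>w. w \<in> AndII n \<Longrightarrow> Des (h w) = Des w \<and> ides (h w) = ides w"
    using AndII_RS_bij[OF assms] by blast
  have "(\<Sum>\<sigma>\<in>AndII n. W (Des \<sigma>, ides \<sigma>)) = (\<Sum>\<sigma>\<in>AndII n. W (Des (h \<sigma>), ides (h \<sigma>)))"
    using h(2) by (intro sum.cong) auto
  also have "\<dots> = (\<Sum>\<sigma>\<in>RS n. W (Des \<sigma>, ides \<sigma>))"
    using sum.reindex_bij_betw[OF h(1), of "\<lambda>\<sigma>. W (Des \<sigma>, ides \<sigma>)"] .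
  finally show "(\<Sum>\<sigma>\<in>AndII n. s ^ ides \<sigma> * t ^ des \<sigma> * q ^ maj \<sigma>) = (\<Sum>\<sigma>\<in>RS n. s ^ ides \<sigma> * t ^ des \<sigma> * q ^ maj \<sigma>)"
    unfolding summand .
qed

end
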